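(* Let $T$ be a complete first-order theory and $\pi(\bar x)$ a partial type over $\emptyset$ (with $\bar x$ a possibly infinite tuple of variables). Let $M$ and $M'$ be two $\aleph_0$-saturated and strongly $\aleph_0$-homogeneous models of $T$. If there is an $\mathrm{Aut}(M)$-invariant regular Borel probability measure on $S_\pi(M)=\{q\in S_{\bar x}(M):\pi\subseteq q\}$, then there is an $\mathrm{Aut}(M')$-invariant regular Borel probability measure on $S_\pi(M')$. In particular, amenability of $\pi$ does not depend on the choice of the monster model, and $\pi$ is amenable if and only if there is an $\mathrm{Aut}(M)$-invariant regular Borel probability measure on $S_\pi(M)$ for some (equivalently, any) $\aleph_0$-saturated and strongly $\aleph_0$-homogeneous model $M$.
   Context: A model $N$ is strongly $\aleph_0$-homogeneous if every partial elementary map between finite subsets of $N$ extends to an automorphism of $N$. $\mathrm{Aut}(N)$ acts on $S_\pi(N)$ by $\varphi(\bar x,\sigma(\bar b))\in\sigma q$ iff $\varphi(\bar x,\bar b)\in q$. A partial type $\pi(\bar x)$ over $\emptyset$ is amenable if there is an $\mathrm{Aut}(\mathfrak C)$-invariant regular Borel probability measure on $S_\pi(\mathfrak C)$, where $\mathfrak C$ is a monster model of $T$ ($\kappa$-saturated and strongly $\kappa$-homogeneous for a large $\kappa$). *)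

theory Defs
  imports "HOL-Analysis.Analysis" "HOL-Probability.Probability"
begin

text \<open>Terms over function symbols 'f, variables 'v and parameters (names for
elements of a structure) 'p.\<close>
datatype ('f, 'v, 'p) trm = Var 'v | Par 'p | Fn 'f "('f, 'v, 'p) trm list"

datatype ('f, 'r, 'v, 'p) fm =
    Eq "('f, 'v, 'p) trm" "('f, 'v, 'p) trm"
  | Rel 'r "('f, 'v, 'p) trm list"
  | Neg "('f, 'r, 'v, 'p) fm"
  | Conj "('f, 'r, 'v, 'p) fm" "('f, 'r, 'v, 'p) fm"
  | Ex 'v "('f, 'r, 'v, 'p) fm"

type_synonym ('f, 'r) lang = "('f \<Rightarrow> nat) \<times> ('r \<Rightarrow> nat)"

fun wf_trm :: "('f, 'r) lang \<Rightarrow> ('f, 'v, 'p) trm \<Rightarrow> bool" where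
  "wf_trm L (Var x) = True"
| "wf_trm L (Par a) = True"
| "wf_trm L (Fn f ts) = (length ts = fst L f \<and> (\<forall>t\<in>set ts. wf_trm L t))"

fun wf_fm :: "('f, 'r) lang \<Rightarrow> ('f, 'r, 'v, 'p) fm \<Rightarrow> bool" where
  "wf_fm L (Eq s t) = (wf_trm L s \<and> wf_trm L t)"
| "wf_fm L (Rel r ts) = (length ts = snd L r \<and> (\<forall>t\<in>set ts. wf_trm L t))"
| "wf_fm L (Neg \<phi>) = wf_fm L \<phi>"
| "wf_fm L (Conj \<phi> \<psi>) = (wf_fm L \<phi> \<and> wf_fm L \<psi>)"
| "wf_fm L (Ex x \<phi>) = wf_fm L \<phi>"

fun fv_trm :: "('f, 'v, 'p) trm \<Rightarrow> 'v set" where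
  "fv_trm (Var x) = {x}"
| "fv_trm (Par a) = {}"
| "fv_trm (Fn f ts) = (\<Union>t\<in>set ts. fv_trm t)"

fun fv :: "('f, 'r, 'v, 'p) fm \<Rightarrow> 'v set" where
  "fv (Eq s t) = fv_trm s \<union> fv_trm t"
| "fv (Rel r ts) = (\<Union>t\<in>set ts. fv_trm t)"
| "fv (Neg \<phi>) = fv \<phi>"
| "fv (Conj \<phi> \<psi>) = fv \<phi> \<union> fv \<psi>"
| "fv (Ex x \<phi>) = fv \<phi> - {x}"

fun params_trm :: "('f, 'v, 'p) trm \<Rightarrow> 'p set" where
  "params_trm (Var x) = {}"
| "params_trm (Par a) = {a}"
| "params_trm (Fn f ts) = (\<Union>t\<in>set ts. params_trm t)"

fun params :: "('f, 'r, 'v, 'p) fm \<Rightarrow> 'p set" where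
  "params (Eq s t) = params_trm s \<union> params_trm t"
| "params (Rel r ts) = (\<Union>t\<in>set ts. params_trm t)"
| "params (Neg \<phi>) = params \<phi>"
| "params (Conj \<phi> \<psi>) = params \<phi> \<union> params \<psi>"
| "params (Ex x \<phi>) = params \<phi>"

fun map_par_trm :: "('p \<Rightarrow> 'q) \<Rightarrow> ('f, 'v, 'p) trm \<Rightarrow> ('f, 'v, 'q) trm" where
  "map_par_trm g (Var x) = Var x"
| "map_par_trm g (Par a) = Par (g a)"
| "map_par_trm g (Fn f ts) = Fn f (map (map_par_trm g) ts)"

fun map_par :: "('p \<Rightarrow> 'q) \<Rightarrow> ('f, 'r, 'v, 'p) fm \<Rightarrow> ('f, 'r, 'v, 'q) fm" where
  "map_par g (Eq s t) = Eq (map_par_trm g s) (map_par_trm g t)"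
| "map_par g (Rel r ts) = Rel r (map (map_par_trm g) ts)"
| "map_par g (Neg \<phi>) = Neg (map_par g \<phi>)"
| "map_par g (Conj \<phi> \<psi>) = Conj (map_par g \<phi>) (map_par g \<psi>)"
| "map_par g (Ex x \<phi>) = Ex x (map_par g \<phi>)"

text \<open>Pure L-formulas (without parameters) are represented with the dummy
parameter type unit and no parameter occurrences; \<open>lift\<close> views them as
formulas with parameters of any type.\<close>
definition lift :: "('f, 'r, 'v, unit) fm \<Rightarrow> ('f, 'r, 'v, 'p) fm" where
  "lift \<phi> = map_par (\<lambda>_. undefined) \<phi>"

definition L_formula :: "('f, 'r) lang \<Rightarrow> ('f, 'r, 'v, unit) fm \<Rightarrow> bool" where
  "L_formula L \<phi> \<longleftrightarrow> wf_fm L \<phi> \<and> params \<phi> = {}"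

definition L_sentence :: "('f, 'r) lang \<Rightarrow> ('f, 'r, 'v, unit) fm \<Rightarrow> bool" where
  "L_sentence L \<phi> \<longleftrightarrow> L_formula L \<phi> \<and> fv \<phi> = {}"

record ('f, 'r, 'm) struct =
  univ :: "'m set"
  fint :: "'f \<Rightarrow> 'm list \<Rightarrow> 'm"
  rint :: "'r \<Rightarrow> 'm list \<Rightarrow> bool"

definition is_struct :: "('f, 'r) lang \<Rightarrow> ('f, 'r, 'm) struct \<Rightarrow> bool" where
  "is_struct L M \<longleftrightarrow> univ M \<noteq> {} \<and>
     (\<forall>f xs. set xs \<subseteq> univ M \<and> length xs = fst L f \<longrightarrow> fint M f xs \<in> univ M)"

fun eval_trm :: "('f, 'r, 'm) struct \<Rightarrow> ('v \<Rightarrow> 'm) \<Rightarrow> ('f, 'v, 'm) trm \<Rightarrow> 'm" where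
  "eval_trm M e (Var x) = e x"
| "eval_trm M e (Par a) = a"
| "eval_trm M e (Fn f ts) = fint M f (map (eval_trm M e) ts)"

fun sat :: "('f, 'r, 'm) struct \<Rightarrow> ('v \<Rightarrow> 'm) \<Rightarrow> ('f, 'r, 'v, 'm) fm \<Rightarrow> bool" where
  "sat M e (Eq s t) = (eval_trm M e s = eval_trm M e t)"
| "sat M e (Rel r ts) = rint M r (map (eval_trm M e) ts)"
| "sat M e (Neg \<phi>) = (\<not> sat M e \<phi>)"
| "sat M e (Conj \<phi> \<psi>) = (sat M e \<phi> \<and> sat M e \<psi>)"
| "sat M e (Ex x \<phi>) = (\<exists>a\<in>univ M. sat M (e(x := a)) \<phi>)"

definition assignment :: "('f, 'r, 'm) struct \<Rightarrow> ('v \<Rightarrow> 'm) \<Rightarrow> bool" where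
  "assignment M e \<longleftrightarrow> (\<forall>v. e v \<in> univ M)"

definition is_model :: "('f, 'r) lang \<Rightarrow> ('f, 'r, 'v, unit) fm set \<Rightarrow> ('f, 'r, 'm) struct \<Rightarrow> bool" where
  "is_model L T M \<longleftrightarrow> is_struct L M \<and> (\<forall>\<phi>\<in>T. \<forall>e. assignment M e \<longrightarrow> sat M e (lift \<phi>))"

definition complete_theory :: "('f, 'r) lang \<Rightarrow> ('f, 'r, 'v, unit) fm set \<Rightarrow> bool" where
  "complete_theory L T \<longleftrightarrow> (\<forall>\<phi>\<in>T. L_sentence L \<phi>) \<and>
     (\<forall>\<phi>. L_sentence L \<phi> \<longrightarrow> \<phi> \<in> T \<or> Neg \<phi> \<in> T)"

text \<open>A partial type over the empty set in the variables \<open>x\<close> (indexed by 'x):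
a set of L-formulas whose free variables are among \<open>x = (Inl i)_i\<close>
(the variables \<open>Inr n\<close> are auxiliary, e.g. for quantification).\<close>
definition partial_type :: "('f, 'r) lang \<Rightarrow> ('f, 'r, 'x + nat, unit) fm set \<Rightarrow> bool" where
  "partial_type L \<pi> \<longleftrightarrow> (\<forall>\<phi>\<in>\<pi>. L_formula L \<phi> \<and> fv \<phi> \<subseteq> range Inl)"

definition Aut :: "('f, 'r) lang \<Rightarrow> ('f, 'r, 'm) struct \<Rightarrow> ('m \<Rightarrow> 'm) set" where
  "Aut L M = {\<sigma>. bij_betw \<sigma> (univ M) (univ M) \<and>
     (\<forall>f xs. set xs \<subseteq> univ M \<and> length xs = fst L f \<longrightarrow> \<sigma> (fint M f xs) = fint M f (map \<sigma> xs)) \<and>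
     (\<forall>r xs. set xs \<subseteq> univ M \<and> length xs = snd L r \<longrightarrow> rint M r (map \<sigma> xs) = rint M r xs)}"

definition partial_elementary ::
  "('f, 'r) lang \<Rightarrow> ('f, 'r, 'm) struct \<Rightarrow> 'm set \<Rightarrow> ('m \<Rightarrow> 'm) \<Rightarrow> bool" where
  "partial_elementary L M A h \<longleftrightarrow> A \<subseteq> univ M \<and> h ` A \<subseteq> univ M \<and>
     (\<forall>(\<phi> :: ('f, 'r, nat, unit) fm) e. L_formula L \<phi> \<and> (\<forall>v. e v \<in> A) \<longrightarrow>
        (sat M e (lift \<phi>) \<longleftrightarrow> sat M (h \<circ> e) (lift \<phi>)))"

definition strongly_aleph0_homogeneous :: "('f, 'r) lang \<Rightarrow> ('f, 'r, 'm) struct \<Rightarrow> bool" where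
  "strongly_aleph0_homogeneous L M \<longleftrightarrow>
     (\<forall>A h. finite A \<and> partial_elementary L M A h \<longrightarrow> (\<exists>\<sigma>\<in>Aut L M. \<forall>a\<in>A. \<sigma> a = h a))"

definition aleph0_saturated :: "('f, 'r) lang \<Rightarrow> ('f, 'r, 'm) struct \<Rightarrow> bool" where
  "aleph0_saturated L M \<longleftrightarrow>
     (\<forall>A (p :: ('f, 'r, nat, 'm) fm set). finite A \<and> A \<subseteq> univ M \<and>
        (\<forall>\<phi>\<in>p. wf_fm L \<phi> \<and> params \<phi> \<subseteq> A \<and> fv \<phi> \<subseteq> {0}) \<and>
        (\<forall>F\<subseteq>p. finite F \<longrightarrow> (\<exists>e. assignment M e \<and> (\<forall>\<phi>\<in>F. sat M e \<phi>)))
      \<longrightarrow> (\<exists>e. assignment M e \<and> (\<forall>\<phi>\<in>p. sat M e \<phi>)))"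

definition LM_formulas :: "('f, 'r) lang \<Rightarrow> ('f, 'r, 'm) struct \<Rightarrow> ('f, 'r, 'x + nat, 'm) fm set" where
  "LM_formulas L M = {\<phi>. wf_fm L \<phi> \<and> params \<phi> \<subseteq> univ M \<and> fv \<phi> \<subseteq> range Inl}"

text \<open>\<open>S_x(M)\<close>: complete types over M, i.e. maximal sets of L(M)-formulas in
\<open>x\<close> which are finitely satisfiable in M (= consistent with Th(M_M)).\<close>
definition types :: "('f, 'r) lang \<Rightarrow> ('f, 'r, 'm) struct \<Rightarrow> ('f, 'r, 'x + nat, 'm) fm set set" where
  "types L M = {q. q \<subseteq> LM_formulas L M \<and>
      (\<forall>\<phi>\<in>LM_formulas L M. \<phi> \<in> q \<or> Neg \<phi> \<in> q) \<and>
      (\<forall>F\<subseteq>q. finite F \<longrightarrow> (\<exists>e. assignment M e \<and> (\<forall>\<phi>\<in>F. sat M e \<phi>)))}"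

definition types_pi ::
  "('f, 'r) lang \<Rightarrow> ('f, 'r, 'x + nat, unit) fm set \<Rightarrow> ('f, 'r, 'm) struct \<Rightarrow> ('f, 'r, 'x + nat, 'm) fm set set" where
  "types_pi L \<pi> M = {q \<in> types L M. lift ` \<pi> \<subseteq> q}"

definition stone_top ::
  "('f, 'r) lang \<Rightarrow> ('f, 'r, 'x + nat, unit) fm set \<Rightarrow> ('f, 'r, 'm) struct \<Rightarrow> ('f, 'r, 'x + nat, 'm) fm set topology" where
  "stone_top L \<pi> M = subtopology
     (topology_generated_by {{q \<in> types_pi L \<pi> M. \<phi> \<in> q} | \<phi>. \<phi> \<in> LM_formulas L M})
     (types_pi L \<pi> M)"

definition act_type :: "('m \<Rightarrow> 'm) \<Rightarrow> ('f, 'r, 'v, 'm) fm set \<Rightarrow> ('f, 'r, 'v, 'm) fm set" where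
  "act_type \<sigma> q = map_par \<sigma> ` q"

definition borel_of :: "'a topology \<Rightarrow> 'a measure" where
  "borel_of X = sigma (topspace X) {U. openin X U}"

definition regular_borel_prob :: "'a topology \<Rightarrow> 'a measure \<Rightarrow> bool" where
  "regular_borel_prob X \<mu> \<longleftrightarrow> prob_space \<mu> \<and> space \<mu> = topspace X \<and>
     sets \<mu> = sets (borel_of X) \<and>
     (\<forall>B\<in>sets \<mu>.
        measure \<mu> B = (INF U\<in>{U. openin X U \<and> B \<subseteq> U}. measure \<mu> U) \<and>
        measure \<mu> B = (SUP C\<in>{C. closedin X C \<and> C \<subseteq> B}. measure \<mu> C))"

definition aut_invariant_measure ::
  "('f, 'r) lang \<Rightarrow> ('f, 'r, 'x + nat, unit) fm set \<Rightarrow> ('f, 'r, 'm) struct \<Rightarrow> ('f, 'r, 'x + nat, 'm) fm set measure \<Rightarrow> bool" where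
  "aut_invariant_measure L \<pi> M \<mu> \<longleftrightarrow>
     regular_borel_prob (stone_top L \<pi> M) \<mu> \<and>
     (\<forall>\<sigma>\<in>Aut L M. \<forall>B\<in>sets \<mu>. emeasure \<mu> (act_type \<sigma> ` B) = emeasure \<mu> B)"

end

theory Submission
  imports Defs
begin

text \<open>Let \<open>\<mu>\<close> be an \<open>Aut(M)\<close>-invariant regular Borel probability measure on \<open>S\<^sub>\<pi>(M)\<close>.
A basic clopen set \<open>[\<phi>(x, b)]\<close> of \<open>S\<^sub>\<pi>(M')\<close> mentions finitely many parameters \<open>b\<close>; since \<open>T\<close>
is complete and \<open>M\<close> is \<open>\<aleph>\<^sub>0\<close>-saturated, \<open>b\<close> has an elementary copy \<open>g b\<close> in \<open>M\<close>, and
\<open>[\<phi>(x, b)]\<close> gets the mass \<open>\<mu>[\<phi>(x, g b)]\<close>. Two copies differ by a partial elementary map of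
\<open>M\<close>, which extends to an automorphism by strong homogeneity, so the mass is well defined;
elementarity of \<open>g\<close> makes it a finitely additive probability on the clopen algebra, and it is
\<open>Aut(M')\<close>-invariant because an automorphism of \<open>M'\<close> just changes the copy. Since the clopen
sets of the Stone space \<open>S\<^sub>\<pi>(M')\<close> are compact and form a basis, this content extends to a
regular Borel probability measure by a canonical construction, which therefore inherits the
invariance.\<close>

fun rename_trm :: "('v \<Rightarrow> 'w) \<Rightarrow> ('p \<Rightarrow> 'w + 'q) \<Rightarrow> ('f, 'v, 'p) trm \<Rightarrow> ('f, 'w, 'q) trm" where
  "rename_trm \<rho> \<kappa> (Var v) = Var (\<rho> v)"
| "rename_trm \<rho> \<kappa> (Par a) = case_sum Var Par (\<kappa> a)"
| "rename_trm \<rho> \<kappa> (Fn f ts) = Fn f (map (rename_trm \<rho> \<kappa>) ts)"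

fun rename_fm :: "('v \<Rightarrow> 'w) \<Rightarrow> ('p \<Rightarrow> 'w + 'q) \<Rightarrow> ('f, 'r, 'v, 'p) fm \<Rightarrow> ('f, 'r, 'w, 'q) fm" where
  "rename_fm \<rho> \<kappa> (Eq s t) = Eq (rename_trm \<rho> \<kappa> s) (rename_trm \<rho> \<kappa> t)"
| "rename_fm \<rho> \<kappa> (Rel r ts) = Rel r (map (rename_trm \<rho> \<kappa>) ts)"
| "rename_fm \<rho> \<kappa> (Neg \<phi>) = Neg (rename_fm \<rho> \<kappa> \<phi>)"
| "rename_fm \<rho> \<kappa> (Conj \<phi> \<psi>) = Conj (rename_fm \<rho> \<kappa> \<phi>) (rename_fm \<rho> \<kappa> \<psi>)"
| "rename_fm \<rho> \<kappa> (Ex x \<phi>) = Ex (\<rho> x) (rename_fm \<rho> \<kappa> \<phi>)"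

definition par_value :: "('p \<Rightarrow> 'w + 'q) \<Rightarrow> ('w \<Rightarrow> 'q) \<Rightarrow> 'p \<Rightarrow> 'q" where
  "par_value \<kappa> e a = case_sum e id (\<kappa> a)"

definition par_vars :: "('p \<Rightarrow> 'w + 'q) \<Rightarrow> 'p set \<Rightarrow> 'w set" where
  "par_vars \<kappa> P = {w. \<exists>a\<in>P. \<kappa> a = Inl w}"

fun vars :: "('f, 'r, 'v, 'p) fm \<Rightarrow> 'v set" where
  "vars (Eq s t) = fv_trm s \<union> fv_trm t"
| "vars (Rel r ts) = (\<Union>t\<in>set ts. fv_trm t)"
| "vars (Neg \<phi>) = vars \<phi>"
| "vars (Conj \<phi> \<psi>) = vars \<phi> \<union> vars \<psi>"
| "vars (Ex x \<phi>) = insert x (vars \<phi>)"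

fun inst_trm :: "('v \<Rightarrow> 'p option) \<Rightarrow> ('f, 'v, 'p) trm \<Rightarrow> ('f, 'v, 'p) trm" where
  "inst_trm c (Var v) = (case c v of Some a \<Rightarrow> Par a | None \<Rightarrow> Var v)"
| "inst_trm c (Par a) = Par a"
| "inst_trm c (Fn f ts) = Fn f (map (inst_trm c) ts)"

fun inst_fm :: "('v \<Rightarrow> 'p option) \<Rightarrow> ('f, 'r, 'v, 'p) fm \<Rightarrow> ('f, 'r, 'v, 'p) fm" where
  "inst_fm c (Eq s t) = Eq (inst_trm c s) (inst_trm c t)"
| "inst_fm c (Rel r ts) = Rel r (map (inst_trm c) ts)"
| "inst_fm c (Neg \<phi>) = Neg (inst_fm c \<phi>)"
| "inst_fm c (Conj \<phi> \<psi>) = Conj (inst_fm c \<phi>) (inst_fm c \<psi>)"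
| "inst_fm c (Ex x \<phi>) = Ex x (inst_fm (c(x := None)) \<phi>)"

fun Exs :: "'v list \<Rightarrow> ('f, 'r, 'v, 'p) fm \<Rightarrow> ('f, 'r, 'v, 'p) fm" where
  "Exs [] \<phi> = \<phi>"
| "Exs (x # xs) \<phi> = Ex x (Exs xs \<phi>)"

fun Conjs :: "('f, 'r, 'v, 'p) fm list \<Rightarrow> ('f, 'r, 'v, 'p) fm \<Rightarrow> ('f, 'r, 'v, 'p) fm" where
  "Conjs [] \<psi> = \<psi>"
| "Conjs (\<phi> # \<phi>s) \<psi> = Conj \<phi> (Conjs \<phi>s \<psi>)"

lemma finite_fv_trm: "finite (fv_trm t)"
  by (induction t) auto

lemma finite_fv: "finite (fv \<phi>)"
  by (induction \<phi>) (auto simp: finite_fv_trm)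

lemma finite_vars: "finite (vars \<phi>)"
  by (induction \<phi>) (auto simp: finite_fv_trm)

lemma fv_subset_vars: "fv \<phi> \<subseteq> vars \<phi>"
  by (induction \<phi>) auto

lemma finite_params_trm: "finite (params_trm t)"
  by (induction t) auto

lemma finite_params: "finite (params \<phi>)"
  by (induction \<phi>) (auto simp: finite_params_trm)

lemma map_par_trm_cong: "(\<And>a. a \<in> params_trm t \<Longrightarrow> g a = h a) \<Longrightarrow> map_par_trm g t = map_par_trm h t"
  by (induction t) auto

lemma map_par_cong: "(\<And>a. a \<in> params \<phi> \<Longrightarrow> g a = h a) \<Longrightarrow> map_par g \<phi> = map_par h \<phi>"
  by (induction \<phi>) (auto intro: map_par_trm_cong)

lemma fv_map_par_trm [simp]: "fv_trm (map_par_trm g t) = fv_trm t"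
  by (induction t) auto

lemma fv_map_par [simp]: "fv (map_par g \<phi>) = fv \<phi>"
  by (induction \<phi>) auto

lemma params_map_par_trm [simp]: "params_trm (map_par_trm g t) = g ` params_trm t"
  by (induction t) auto

lemma params_map_par [simp]: "params (map_par g \<phi>) = g ` params \<phi>"
  by (induction \<phi>) (auto simp: image_Un image_UN)

lemma wf_map_par_trm [simp]: "wf_trm L (map_par_trm g t) = wf_trm L t"
  by (induction t) auto

lemma wf_map_par [simp]: "wf_fm L (map_par g \<phi>) = wf_fm L \<phi>"
  by (induction \<phi>) auto

lemma map_par_trm_map_par_trm: "map_par_trm g (map_par_trm h t) = map_par_trm (g \<circ> h) t"
  by (induction t) (auto simp: comp_def)

lemma map_par_map_par: "map_par g (map_par h \<phi>) = map_par (g \<circ> h) \<phi>"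
  by (induction \<phi>) (auto simp: map_par_trm_map_par_trm comp_def)

lemma map_par_trm_ident: "map_par_trm (\<lambda>a. a) t = t"
  by (induction t) (auto simp: map_idI)

lemma map_par_ident: "map_par (\<lambda>a. a) \<phi> = \<phi>"
  by (induction \<phi>) (auto simp: map_par_trm_ident map_idI)

lemma map_par_id_on:
  assumes "\<And>a. a \<in> params \<phi> \<Longrightarrow> g a = a"
  shows "map_par g \<phi> = \<phi>"
  using map_par_cong[of \<phi> g "\<lambda>a. a"] assms by (simp add: map_par_ident)

lemma map_par_lift:
  assumes "params \<phi> = {}"
  shows "map_par g (lift \<phi>) = lift \<phi>"
  unfolding lift_def map_par_map_par by (rule map_par_cong) (use assms in auto)

lemma map_par_rename_trm:
  "map_par_trm g (rename_trm \<rho> \<kappa> t) = rename_trm \<rho> (map_sum id g \<circ> \<kappa>) t"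
  by (induction t) (auto simp: comp_def split: sum.splits)

lemma map_par_rename_fm:
  "map_par g (rename_fm \<rho> \<kappa> \<phi>) = rename_fm \<rho> (map_sum id g \<circ> \<kappa>) \<phi>"
  by (induction \<phi>) (auto simp: map_par_rename_trm comp_def id_def)

lemma wf_rename_trm [simp]: "wf_trm L (rename_trm \<rho> \<kappa> t) = wf_trm L t"
  by (induction t) (auto split: sum.splits)

lemma wf_rename_fm [simp]: "wf_fm L (rename_fm \<rho> \<kappa> \<phi>) = wf_fm L \<phi>"
  by (induction \<phi>) auto

lemma fv_rename_trm: "fv_trm (rename_trm \<rho> \<kappa> t) \<subseteq> \<rho> ` fv_trm t \<union> par_vars \<kappa> (params_trm t)"
  by (induction t) (fastforce simp: par_vars_def split: sum.splits)+

lemma fv_rename_fm: "fv (rename_fm \<rho> \<kappa> \<phi>) \<subseteq> \<rho> ` fv \<phi> \<union> par_vars \<kappa> (params \<phi>)"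
proof (induction \<phi>)
  case (Eq s t)
  then show ?case
    using fv_rename_trm[of \<rho> \<kappa> s] fv_rename_trm[of \<rho> \<kappa> t] by (auto simp: par_vars_def)
next
  case (Rel r ts)
  then show ?case using fv_rename_trm[of \<rho> \<kappa>] by (fastforce simp: par_vars_def)
qed (auto simp: par_vars_def)

lemma params_rename_trm: "params_trm (rename_trm \<rho> \<kappa> t) = {q. \<exists>a\<in>params_trm t. \<kappa> a = Inr q}"
  by (induction t) (auto split: sum.splits)

lemma params_rename_fm: "params (rename_fm \<rho> \<kappa> \<phi>) = {q. \<exists>a\<in>params \<phi>. \<kappa> a = Inr q}"
  by (induction \<phi>) (auto simp: params_rename_trm)

lemma par_value_Inr [simp]: "par_value (\<lambda>a. Inr (g a)) e = g"
  by (simp add: par_value_def fun_eq_iff)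

lemma par_vars_Inr [simp]: "par_vars (\<lambda>a. Inr (h a)) P = {}"
  unfolding par_vars_def by simp

lemma map_par_inst_trm: "map_par_trm g (inst_trm c t) = inst_trm (\<lambda>v. map_option g (c v)) (map_par_trm g t)"
  by (induction t) (auto split: option.splits)

lemma map_par_inst_fm: "map_par g (inst_fm c \<phi>) = inst_fm (\<lambda>v. map_option g (c v)) (map_par g \<phi>)"
proof (induction \<phi> arbitrary: c)
  case (Ex x \<phi>)
  have "(\<lambda>v. map_option g (c v))(x := None) = (\<lambda>v. map_option g ((c(x := None)) v))"
    by auto
  then show ?case using Ex.IH by simp
qed (auto simp: map_par_inst_trm)

lemma wf_inst_trm [simp]: "wf_trm L (inst_trm c t) = wf_trm L t"
  by (induction t) (auto split: option.splits)

lemma wf_inst_fm [simp]: "wf_fm L (inst_fm c \<phi>) = wf_fm L \<phi>"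
  by (induction \<phi> arbitrary: c) auto

lemma fv_inst_trm: "fv_trm (inst_trm c t) \<subseteq> {v \<in> fv_trm t. c v = None}"
  by (induction t) (auto split: option.splits)

lemma fv_inst_fm: "fv (inst_fm c \<phi>) \<subseteq> {v \<in> fv \<phi>. c v = None}"
proof (induction \<phi> arbitrary: c)
  case (Eq s t)
  then show ?case using fv_inst_trm[of c s] fv_inst_trm[of c t] by auto
next
  case (Rel r ts)
  then show ?case using fv_inst_trm[of c] by fastforce
next
  case (Conj \<phi> \<psi>)
  then show ?case using Conj.IH[of c] by fastforce
next
  case (Ex x \<phi>)
  then show ?case using Ex.IH[of "c(x := None)"] by fastforce
qed auto

lemma params_inst_trm: "params_trm (inst_trm c t) \<subseteq> params_trm t \<union> {a. \<exists>v. c v = Some a}"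
  by (induction t) (auto split: option.splits)

lemma params_inst_fm: "params (inst_fm c \<phi>) \<subseteq> params \<phi> \<union> {a. \<exists>v. c v = Some a}"
proof (induction \<phi> arbitrary: c)
  case (Eq s t)
  then show ?case using params_inst_trm[of c s] params_inst_trm[of c t] by auto
next
  case (Rel r ts)
  then show ?case using params_inst_trm[of c] by fastforce
next
  case (Conj \<phi> \<psi>)
  then show ?case using Conj.IH[of c] by fastforce
next
  case (Ex x \<phi>)
  then show ?case using Ex.IH[of "c(x := None)"] by (fastforce split: if_splits)
qed auto

definition Disj :: "('f, 'r, 'v, 'p) fm \<Rightarrow> ('f, 'r, 'v, 'p) fm \<Rightarrow> ('f, 'r, 'v, 'p) fm" where
  "Disj \<phi> \<psi> = Neg (Conj (Neg \<phi>) (Neg \<psi>))"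

lemma map_par_Disj [simp]: "map_par g (Disj \<phi> \<psi>) = Disj (map_par g \<phi>) (map_par g \<psi>)"
  unfolding Disj_def by simp

lemma params_Disj [simp]: "params (Disj \<phi> \<psi>) = params \<phi> \<union> params \<psi>"
  unfolding Disj_def by simp

lemma eval_trm_cong: "(\<And>v. v \<in> fv_trm t \<Longrightarrow> e v = e' v) \<Longrightarrow> eval_trm M e t = eval_trm M e' t"
proof (induction t)
  case (Fn f ts)
  then have "map (eval_trm M e) ts = map (eval_trm M e') ts"
    by (intro map_cong) auto
  then show ?case by (simp only: eval_trm.simps)
qed auto

lemma sat_cong: "(\<And>v. v \<in> fv \<phi> \<Longrightarrow> e v = e' v) \<Longrightarrow> sat M e \<phi> = sat M e' \<phi>"
proof (induction \<phi> arbitrary: e e')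
  case (Eq s t)
  have "eval_trm M e s = eval_trm M e' s" "eval_trm M e t = eval_trm M e' t"
    using Eq.prems by (auto intro!: eval_trm_cong)
  then show ?case by simp
next
  case (Rel r ts)
  have "map (eval_trm M e) ts = map (eval_trm M e') ts"
    using Rel.prems by (auto intro!: map_cong eval_trm_cong)
  then show ?case by (simp only: sat.simps)
next
  case (Neg \<phi>)
  have "sat M e \<phi> = sat M e' \<phi>"
    using Neg.prems by (intro Neg.IH) simp
  then show ?case by simp
next
  case (Conj \<phi> \<psi>)
  have "sat M e \<phi> = sat M e' \<phi>" "sat M e \<psi> = sat M e' \<psi>"
    using Conj.prems by (auto intro!: Conj.IH)
  then show ?case by simp
next
  case (Ex x \<phi>)
  have "sat M (e(x := a)) \<phi> = sat M (e'(x := a)) \<phi>" for a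
    using Ex.prems by (intro Ex.IH) auto
  then show ?case by simp
qed

lemma sat_sentence: "fv \<phi> = {} \<Longrightarrow> sat M e \<phi> = sat M e' \<phi>"
  by (rule sat_cong) simp

lemma eval_rename_trm:
  "eval_trm M e (rename_trm \<rho> \<kappa> t) = eval_trm M (\<lambda>v. e (\<rho> v)) (map_par_trm (par_value \<kappa> e) t)"
proof (induction t)
  case (Fn f ts)
  then have "map (eval_trm M e \<circ> rename_trm \<rho> \<kappa>) ts
      = map (eval_trm M (\<lambda>v. e (\<rho> v)) \<circ> map_par_trm (par_value \<kappa> e)) ts"
    by (intro map_cong) auto
  then show ?case by (simp only: rename_trm.simps map_par_trm.simps eval_trm.simps map_map)
qed (auto simp: par_value_def split: sum.splits)

lemma sat_rename_fm:
  assumes "inj_on \<rho> (vars \<phi>)" and "\<rho> ` vars \<phi> \<inter> par_vars \<kappa> (params \<phi>) = {}"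
  shows "sat M e (rename_fm \<rho> \<kappa> \<phi>) = sat M (\<lambda>v. e (\<rho> v)) (map_par (par_value \<kappa> e) \<phi>)"
  using assms
proof (induction \<phi> arbitrary: e)
  case (Rel r ts)
  have "map (eval_trm M e \<circ> rename_trm \<rho> \<kappa>) ts
      = map (eval_trm M (\<lambda>v. e (\<rho> v)) \<circ> map_par_trm (par_value \<kappa> e)) ts"
    by (intro map_cong) (auto simp: eval_rename_trm)
  then show ?case by (simp only: rename_fm.simps map_par.simps sat.simps map_map)
next
  case (Conj \<phi> \<psi>)
  have "inj_on \<rho> (vars \<phi>)" "inj_on \<rho> (vars \<psi>)"
    using Conj.prems(1) by (auto intro: inj_on_subset)
  moreover have "\<rho> ` vars \<phi> \<inter> par_vars \<kappa> (params \<phi>) = {}" "\<rho> ` vars \<psi> \<inter> par_vars \<kappa> (params \<psi>) = {}"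
    using Conj.prems(2) by (auto simp: par_vars_def)
  ultimately show ?case using Conj.IH by simp
next
  case (Ex x \<phi>)
  have inj: "inj_on \<rho> (vars \<phi>)" and disj: "\<rho> ` vars \<phi> \<inter> par_vars \<kappa> (params \<phi>) = {}"
    using Ex.prems by (auto intro: inj_on_subset)
  have "\<rho> x \<notin> par_vars \<kappa> (params \<phi>)"
    using Ex.prems(2) by auto
  then have par: "map_par (par_value \<kappa> (e(\<rho> x := a))) \<phi> = map_par (par_value \<kappa> e) \<phi>" for a
    by (intro map_par_cong) (auto simp: par_value_def par_vars_def split: sum.split)
  have var: "sat M (\<lambda>v. (e(\<rho> x := a)) (\<rho> v)) \<psi> = sat M ((\<lambda>v. e (\<rho> v))(x := a)) \<psi>"
    if "fv \<psi> \<subseteq> vars \<phi>" for a \<psi>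
  proof (rule sat_cong)
    fix v assume "v \<in> fv \<psi>"
    then have "v \<in> insert x (vars \<phi>)" using that by blast
    then show "(e(\<rho> x := a)) (\<rho> v) = ((\<lambda>v. e (\<rho> v))(x := a)) v"
      using inj_onD[OF Ex.prems(1), of v x] by auto
  qed
  have "sat M (e(\<rho> x := a)) (rename_fm \<rho> \<kappa> \<phi>) =
      sat M ((\<lambda>v. e (\<rho> v))(x := a)) (map_par (par_value \<kappa> e) \<phi>)" for a
  proof -
    have "sat M (e(\<rho> x := a)) (rename_fm \<rho> \<kappa> \<phi>) =
        sat M (\<lambda>v. (e(\<rho> x := a)) (\<rho> v)) (map_par (par_value \<kappa> (e(\<rho> x := a))) \<phi>)"
      by (rule Ex.IH[OF inj disj])
    also have "\<dots> = sat M (\<lambda>v. (e(\<rho> x := a)) (\<rho> v)) (map_par (par_value \<kappa> e) \<phi>)"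
      by (simp only: par)
    also have "\<dots> = sat M ((\<lambda>v. e (\<rho> v))(x := a)) (map_par (par_value \<kappa> e) \<phi>)"
      using fv_subset_vars[of \<phi>] by (intro var) simp
    finally show ?thesis .
  qed
  then show ?case by simp
qed (auto simp: eval_rename_trm)

lemma eval_inst_trm:
  "eval_trm M e (inst_trm c t) = eval_trm M (\<lambda>v. case c v of Some a \<Rightarrow> a | None \<Rightarrow> e v) t"
  by (induction t) (auto split: option.splits cong: map_cong)

lemma sat_inst_fm: "sat M e (inst_fm c \<phi>) = sat M (\<lambda>v. case c v of Some a \<Rightarrow> a | None \<Rightarrow> e v) \<phi>"
proof (induction \<phi> arbitrary: c e)
  case (Ex x \<phi>)
  have "(\<lambda>v. case (c(x := None)) v of Some a \<Rightarrow> a | None \<Rightarrow> (e(x := b)) v)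
      = (\<lambda>v. case c v of Some a \<Rightarrow> a | None \<Rightarrow> e v)(x := b)" for b
    by (auto split: option.splits)
  then show ?case using Ex.IH by simp
qed (auto simp: eval_inst_trm comp_def)

lemma sat_Exs:
  "sat M e (Exs xs \<phi>) \<longleftrightarrow>
   (\<exists>e'. (\<forall>v. v \<notin> set xs \<longrightarrow> e' v = e v) \<and> (\<forall>v\<in>set xs. e' v \<in> univ M) \<and> sat M e' \<phi>)"
proof (induction xs arbitrary: e)
  case Nil
  then show ?case by (auto simp: fun_eq_iff[symmetric])
next
  case (Cons x xs)
  show ?case
  proof
    assume "sat M e (Exs (x # xs) \<phi>)"
    then obtain a e' where "a \<in> univ M" "\<forall>v. v \<notin> set xs \<longrightarrow> e' v = (e(x := a)) v"
      "\<forall>v\<in>set xs. e' v \<in> univ M" "sat M e' \<phi>"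
      using Cons.IH by auto
    then show "\<exists>e'. (\<forall>v. v \<notin> set (x # xs) \<longrightarrow> e' v = e v) \<and> (\<forall>v\<in>set (x # xs). e' v \<in> univ M) \<and>
        sat M e' \<phi>"
      by (intro exI[of _ e']) auto
  next
    assume "\<exists>e'. (\<forall>v. v \<notin> set (x # xs) \<longrightarrow> e' v = e v) \<and> (\<forall>v\<in>set (x # xs). e' v \<in> univ M) \<and>
        sat M e' \<phi>"
    then obtain e' where e': "\<forall>v. v \<notin> set (x # xs) \<longrightarrow> e' v = e v" "\<forall>v\<in>set (x # xs). e' v \<in> univ M"
      "sat M e' \<phi>"
      by blast
    then have "sat M (e(x := e' x)) (Exs xs \<phi>)"
      by (intro iffD2[OF Cons.IH] exI[of _ e']) auto
    then show "sat M e (Exs (x # xs) \<phi>)" using e' by auto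
  qed
qed

lemma fv_Exs [simp]: "fv (Exs xs \<phi>) = fv \<phi> - set xs"
  by (induction xs) auto

lemma params_Exs [simp]: "params (Exs xs \<phi>) = params \<phi>"
  by (induction xs) auto

lemma wf_Exs [simp]: "wf_fm L (Exs xs \<phi>) = wf_fm L \<phi>"
  by (induction xs) auto

lemma map_par_Exs [simp]: "map_par g (Exs xs \<phi>) = Exs xs (map_par g \<phi>)"
  by (induction xs) auto

lemma sat_Conjs [simp]: "sat M e (Conjs \<phi>s \<psi>) \<longleftrightarrow> (\<forall>\<phi>\<in>set \<phi>s. sat M e \<phi>) \<and> sat M e \<psi>"
  by (induction \<phi>s) auto

lemma fv_Conjs [simp]: "fv (Conjs \<phi>s \<psi>) = (\<Union>\<phi>\<in>set \<phi>s. fv \<phi>) \<union> fv \<psi>"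
  by (induction \<phi>s) auto

lemma params_Conjs [simp]: "params (Conjs \<phi>s \<psi>) = (\<Union>\<phi>\<in>set \<phi>s. params \<phi>) \<union> params \<psi>"
  by (induction \<phi>s) auto

lemma wf_Conjs [simp]: "wf_fm L (Conjs \<phi>s \<psi>) \<longleftrightarrow> (\<forall>\<phi>\<in>set \<phi>s. wf_fm L \<phi>) \<and> wf_fm L \<psi>"
  by (induction \<phi>s) auto

lemma map_par_Conjs [simp]: "map_par g (Conjs \<phi>s \<psi>) = Conjs (map (map_par g) \<phi>s) (map_par g \<psi>)"
  by (induction \<phi>s) auto

text \<open>\<open>Eq (Var v) (Var v)\<close> serves as a true formula to close off a conjunction.\<close>

lemma sat_Exs_Conjs_iff:
  assumes "assignment M e" and "fv (Conjs \<phi>s (Eq (Var v) (Var v))) \<subseteq> set vs"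
  shows "sat M e (Exs vs (Conjs \<phi>s (Eq (Var v) (Var v)))) \<longleftrightarrow>
    (\<exists>e'. assignment M e' \<and> (\<forall>\<phi>\<in>set \<phi>s. sat M e' \<phi>))"
proof
  assume "sat M e (Exs vs (Conjs \<phi>s (Eq (Var v) (Var v))))"
  then obtain e' where "\<forall>v. v \<notin> set vs \<longrightarrow> e' v = e v" "\<forall>v\<in>set vs. e' v \<in> univ M"
    "\<forall>\<phi>\<in>set \<phi>s. sat M e' \<phi>"
    unfolding sat_Exs by auto
  moreover from this have "assignment M e'"
    using assms(1) unfolding assignment_def by metis
  ultimately show "\<exists>e'. assignment M e' \<and> (\<forall>\<phi>\<in>set \<phi>s. sat M e' \<phi>)" by blast
next
  assume "\<exists>e'. assignment M e' \<and> (\<forall>\<phi>\<in>set \<phi>s. sat M e' \<phi>)"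
  then obtain e' where e': "assignment M e'" "\<forall>\<phi>\<in>set \<phi>s. sat M e' \<phi>" by blast
  define e'' where "e'' v = (if v \<in> set vs then e' v else e v)" for v
  have "sat M e'' (Conjs \<phi>s (Eq (Var v) (Var v))) = sat M e' (Conjs \<phi>s (Eq (Var v) (Var v)))"
    using assms(2) by (intro sat_cong) (auto simp: e''_def)
  then show "sat M e (Exs vs (Conjs \<phi>s (Eq (Var v) (Var v))))"
    unfolding sat_Exs using e' by (intro exI[of _ e'']) (auto simp: e''_def assignment_def)
qed

lemma assignment_exists: "is_struct L M \<Longrightarrow> \<exists>e. assignment M e"
  by (intro exI[of _ "\<lambda>_. SOME a. a \<in> univ M"]) (auto simp: is_struct_def assignment_def some_in_eq)

lemma eval_trm_in_univ:
  assumes "is_struct L M" and "assignment M e"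
  shows "wf_trm L t \<Longrightarrow> params_trm t \<subseteq> univ M \<Longrightarrow> eval_trm M e t \<in> univ M"
proof (induction t)
  case (Fn f ts)
  then have "set (map (eval_trm M e) ts) \<subseteq> univ M" by auto
  then show ?case using Fn.prems assms(1) unfolding is_struct_def by simp
qed (use assms(2) in \<open>auto simp: assignment_def\<close>)

lemma Aut_bij_betw: "\<sigma> \<in> Aut L M \<Longrightarrow> bij_betw \<sigma> (univ M) (univ M)"
  unfolding Aut_def by blast

lemma Aut_image: "\<sigma> \<in> Aut L M \<Longrightarrow> \<sigma> ` univ M = univ M"
  using Aut_bij_betw bij_betw_imp_surj_on by blast

lemma Aut_inv_into_apply: "\<sigma> \<in> Aut L M \<Longrightarrow> a \<in> univ M \<Longrightarrow> \<sigma> (inv_into (univ M) \<sigma> a) = a"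
  by (metis Aut_image f_inv_into_f)

lemma inv_into_Aut_apply: "\<sigma> \<in> Aut L M \<Longrightarrow> a \<in> univ M \<Longrightarrow> inv_into (univ M) \<sigma> (\<sigma> a) = a"
  by (metis Aut_bij_betw bij_betw_imp_inj_on inv_into_f_f)

lemma eval_trm_Aut:
  assumes "is_struct L M" and \<sigma>: "\<sigma> \<in> Aut L M" and "assignment M e"
  shows "wf_trm L t \<Longrightarrow> params_trm t \<subseteq> univ M \<Longrightarrow>
    eval_trm M (\<lambda>v. \<sigma> (e v)) (map_par_trm \<sigma> t) = \<sigma> (eval_trm M e t)"
proof (induction t)
  case (Fn f ts)
  then have "map (eval_trm M (\<lambda>v. \<sigma> (e v))) (map (map_par_trm \<sigma>) ts) = map \<sigma> (map (eval_trm M e) ts)"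
    by auto
  moreover have "set (map (eval_trm M e) ts) \<subseteq> univ M" "length (map (eval_trm M e) ts) = fst L f"
    using Fn.prems eval_trm_in_univ[OF assms(1,3)] by (auto simp: UN_subset_iff)
  then have "\<sigma> (fint M f (map (eval_trm M e) ts)) = fint M f (map \<sigma> (map (eval_trm M e) ts))"
    using \<sigma> unfolding Aut_def by blast
  ultimately show ?case by (simp only: eval_trm.simps map_par_trm.simps)
qed (use assms in \<open>auto simp: assignment_def\<close>)

lemma sat_map_par_Aut:
  assumes M: "is_struct L M" and \<sigma>: "\<sigma> \<in> Aut L M"
  shows "wf_fm L \<phi> \<Longrightarrow> params \<phi> \<subseteq> univ M \<Longrightarrow> assignment M e \<Longrightarrow>
    sat M (\<lambda>v. \<sigma> (e v)) (map_par \<sigma> \<phi>) = sat M e \<phi>"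
proof (induction \<phi> arbitrary: e)
  case (Eq s t)
  have "inj_on \<sigma> (univ M)"
    using Aut_bij_betw[OF \<sigma>] bij_betw_imp_inj_on by blast
  moreover have "eval_trm M e s \<in> univ M" "eval_trm M e t \<in> univ M"
    using Eq.prems eval_trm_in_univ[OF M] by auto
  moreover have "eval_trm M (\<lambda>v. \<sigma> (e v)) (map_par_trm \<sigma> s) = \<sigma> (eval_trm M e s)"
    "eval_trm M (\<lambda>v. \<sigma> (e v)) (map_par_trm \<sigma> t) = \<sigma> (eval_trm M e t)"
    using Eq.prems eval_trm_Aut[OF M \<sigma>] by auto
  ultimately show ?case by (simp add: inj_on_eq_iff)
next
  case (Rel r ts)
  have "eval_trm M (\<lambda>v. \<sigma> (e v)) (map_par_trm \<sigma> t) = \<sigma> (eval_trm M e t)" if "t \<in> set ts" for t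
    using that Rel.prems eval_trm_Aut[OF M \<sigma> Rel.prems(3), of t] by auto
  then have "map (eval_trm M (\<lambda>v. \<sigma> (e v))) (map (map_par_trm \<sigma>) ts) = map \<sigma> (map (eval_trm M e) ts)"
    by simp
  moreover have "set (map (eval_trm M e) ts) \<subseteq> univ M" "length (map (eval_trm M e) ts) = snd L r"
    using Rel.prems eval_trm_in_univ[OF M Rel.prems(3)] by (auto simp: UN_subset_iff)
  then have "rint M r (map \<sigma> (map (eval_trm M e) ts)) = rint M r (map (eval_trm M e) ts)"
    using \<sigma> unfolding Aut_def by blast
  ultimately show ?case by (simp only: sat.simps map_par.simps)
next
  case (Ex x \<phi>)
  have image: "(\<exists>a\<in>univ M. P a) \<longleftrightarrow> (\<exists>b\<in>univ M. P (\<sigma> b))" for P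
    using Set.bex_simps(7)[where f=\<sigma> and A="univ M" and P=P] Aut_image[OF \<sigma>] by simp
  have "sat M (\<lambda>v. \<sigma> (e v)) (map_par \<sigma> (Ex x \<phi>)) \<longleftrightarrow>
      (\<exists>b\<in>univ M. sat M ((\<lambda>v. \<sigma> (e v))(x := \<sigma> b)) (map_par \<sigma> \<phi>))"
    using image by simp
  also have "\<dots> \<longleftrightarrow> (\<exists>b\<in>univ M. sat M (e(x := b)) \<phi>)"
  proof (intro bex_cong refl)
    fix b assume "b \<in> univ M"
    then have "assignment M (e(x := b))" using Ex.prems(3) by (simp add: assignment_def)
    moreover have "(\<lambda>v. \<sigma> (e v))(x := \<sigma> b) = (\<lambda>v. \<sigma> ((e(x := b)) v))" by auto
    ultimately show "sat M ((\<lambda>v. \<sigma> (e v))(x := \<sigma> b)) (map_par \<sigma> \<phi>) \<longleftrightarrow> sat M (e(x := b)) \<phi>"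
      using Ex.IH[of "e(x := b)"] Ex.prems(1,2) by (simp only: wf_fm.simps params.simps)
  qed
  finally show ?case by simp
qed auto

lemma assignment_Aut: "\<sigma> \<in> Aut L M \<Longrightarrow> assignment M e \<Longrightarrow> assignment M (\<lambda>v. \<sigma> (e v))"
  using Aut_image unfolding assignment_def by fastforce

lemma inv_into_Aut:
  assumes M: "is_struct L M" and \<sigma>: "\<sigma> \<in> Aut L M"
  shows "inv_into (univ M) \<sigma> \<in> Aut L M"
proof -
  let ?\<tau> = "inv_into (univ M) \<sigma>"
  have bij: "bij_betw ?\<tau> (univ M) (univ M)"
    using bij_betw_inv_into[OF Aut_bij_betw[OF \<sigma>]] .
  have \<tau>_univ: "set (map ?\<tau> xs) \<subseteq> univ M" if "set xs \<subseteq> univ M" for xs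
    using that bij bij_betwE by fastforce
  have \<sigma>_\<tau>: "map \<sigma> (map ?\<tau> xs) = xs" if "set xs \<subseteq> univ M" for xs
    using that Aut_inv_into_apply[OF \<sigma>] by (induction xs) auto
  have "?\<tau> (fint M f xs) = fint M f (map ?\<tau> xs)" if xs: "set xs \<subseteq> univ M" "length xs = fst L f" for f xs
  proof -
    have ys: "set (map ?\<tau> xs) \<subseteq> univ M" "length (map ?\<tau> xs) = fst L f"
      using \<tau>_univ[OF xs(1)] xs(2) by auto
    then have "\<sigma> (fint M f (map ?\<tau> xs)) = fint M f xs"
      using \<sigma> \<sigma>_\<tau>[OF xs(1)] unfolding Aut_def by auto
    moreover have "fint M f (map ?\<tau> xs) \<in> univ M"
      using M ys unfolding is_struct_def by blast
    ultimately show ?thesis using inv_into_Aut_apply[OF \<sigma>] by metis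
  qed
  moreover have "rint M r (map ?\<tau> xs) = rint M r xs" if xs: "set xs \<subseteq> univ M" "length xs = snd L r" for r xs
  proof -
    have "set (map ?\<tau> xs) \<subseteq> univ M" "length (map ?\<tau> xs) = snd L r"
      using \<tau>_univ[OF xs(1)] xs(2) by auto
    then have "rint M r (map \<sigma> (map ?\<tau> xs)) = rint M r (map ?\<tau> xs)"
      using \<sigma> unfolding Aut_def by blast
    then show ?thesis using \<sigma>_\<tau>[OF xs(1)] by simp
  qed
  ultimately show ?thesis unfolding Aut_def using bij by blast
qed

lemma map_par_inverse:
  assumes "\<And>a. a \<in> univ M \<Longrightarrow> \<sigma> (\<tau> a) = a" and "params \<phi> \<subseteq> univ M"
  shows "map_par \<sigma> (map_par \<tau> \<phi>) = \<phi>"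
  unfolding map_par_map_par using assms by (intro map_par_id_on) auto

section \<open>Type spaces\<close>

definition fin_sat :: "('f, 'r, 'm) struct \<Rightarrow> ('f, 'r, 'v, 'm) fm set \<Rightarrow> bool" where
  "fin_sat M S \<longleftrightarrow> (\<forall>F\<subseteq>S. finite F \<longrightarrow> (\<exists>e. assignment M e \<and> (\<forall>\<phi>\<in>F. sat M e \<phi>)))"

definition type_box :: "('f, 'r) lang \<Rightarrow> ('f, 'r, 'x + nat, unit) fm set \<Rightarrow> ('f, 'r, 'm) struct \<Rightarrow>
    ('f, 'r, 'x + nat, 'm) fm \<Rightarrow> ('f, 'r, 'x + nat, 'm) fm set set" where
  "type_box L \<pi> M \<phi> = {q \<in> types_pi L \<pi> M. \<phi> \<in> q}"

lemma fin_satD: "fin_sat M S \<Longrightarrow> F \<subseteq> S \<Longrightarrow> finite F \<Longrightarrow> \<exists>e. assignment M e \<and> (\<forall>\<phi>\<in>F. sat M e \<phi>)"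
  unfolding fin_sat_def by blast

lemma fin_sat_subset: "fin_sat M S \<Longrightarrow> S' \<subseteq> S \<Longrightarrow> fin_sat M S'"
  unfolding fin_sat_def by blast

lemma fin_sat_types: "q \<in> types L M \<Longrightarrow> fin_sat M q"
  unfolding types_def fin_sat_def by blast

lemma LM_formulas_Neg: "\<phi> \<in> LM_formulas L M \<Longrightarrow> Neg \<phi> \<in> LM_formulas L M"
  unfolding LM_formulas_def by auto

lemma LM_formulas_Conj: "\<phi> \<in> LM_formulas L M \<Longrightarrow> \<psi> \<in> LM_formulas L M \<Longrightarrow> Conj \<phi> \<psi> \<in> LM_formulas L M"
  unfolding LM_formulas_def by auto

lemma LM_formulas_map_par:
  "\<phi> \<in> LM_formulas L M \<Longrightarrow> g ` params \<phi> \<subseteq> univ N \<Longrightarrow> map_par g \<phi> \<in> LM_formulas L N"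
  unfolding LM_formulas_def by auto

lemma LM_formulas_params: "\<phi> \<in> LM_formulas L M \<Longrightarrow> params \<phi> \<subseteq> univ M"
  unfolding LM_formulas_def by blast

lemma lift_in_LM_formulas: "partial_type L \<pi> \<Longrightarrow> \<phi> \<in> \<pi> \<Longrightarrow> lift \<phi> \<in> LM_formulas L M"
  unfolding partial_type_def LM_formulas_def L_formula_def lift_def by auto

lemma fin_sat_insert_or_insert_Neg:
  assumes "fin_sat M S"
  shows "fin_sat M (insert \<phi> S) \<or> fin_sat M (insert (Neg \<phi>) S)"
proof (rule ccontr)
  assume "\<not> ?thesis"
  then obtain F1 F2 where
    F1: "F1 \<subseteq> insert \<phi> S" "finite F1" "\<nexists>e. assignment M e \<and> (\<forall>\<psi>\<in>F1. sat M e \<psi>)" and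
    F2: "F2 \<subseteq> insert (Neg \<phi>) S" "finite F2" "\<nexists>e. assignment M e \<and> (\<forall>\<psi>\<in>F2. sat M e \<psi>)"
    unfolding fin_sat_def by blast
  have "(F1 - {\<phi>}) \<union> (F2 - {Neg \<phi>}) \<subseteq> S" "finite ((F1 - {\<phi>}) \<union> (F2 - {Neg \<phi>}))"
    using F1 F2 by auto
  then obtain e where e: "assignment M e" "\<forall>\<psi>\<in>(F1 - {\<phi>}) \<union> (F2 - {Neg \<phi>}). sat M e \<psi>"
    using assms unfolding fin_sat_def by meson
  show False
  proof (cases "sat M e \<phi>")
    case True
    then have "\<forall>\<psi>\<in>F1. sat M e \<psi>" using e(2) by blast
    then show False using F1(3) e(1) by blast
  next
    case False
    then have "\<forall>\<psi>\<in>F2. sat M e \<psi>" using e(2) by auto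
    then show False using F2(3) e(1) by blast
  qed
qed

lemma extend_to_type:
  assumes S: "S \<subseteq> LM_formulas L M" and "fin_sat M S"
  shows "\<exists>q\<in>types L M. S \<subseteq> q"
proof -
  define \<A> where "\<A> = {R. S \<subseteq> R \<and> R \<subseteq> LM_formulas L M \<and> fin_sat M R}"
  have "\<Union>\<C> \<in> \<A>" if ne: "\<C> \<noteq> {}" and chain: "subset.chain \<A> \<C>" for \<C>
  proof -
    have "fin_sat M (\<Union>\<C>)"
      unfolding fin_sat_def
    proof (intro allI impI)
      fix F assume "F \<subseteq> \<Union>\<C>" "finite F"
      then obtain R where "R \<in> \<C>" "F \<subseteq> R" "finite F"
        using finite_subset_Union_chain[OF _ _ ne chain] by metis
      then show "\<exists>e. assignment M e \<and> (\<forall>\<phi>\<in>F. sat M e \<phi>)"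
        using chain unfolding subset.chain_def \<A>_def fin_sat_def by blast
    qed
    then show ?thesis
      using ne chain unfolding subset.chain_def \<A>_def by blast
  qed
  moreover have "S \<in> \<A>" using assms unfolding \<A>_def by blast
  ultimately obtain q where q: "q \<in> \<A>" and max: "\<And>R. R \<in> \<A> \<Longrightarrow> q \<subseteq> R \<Longrightarrow> R = q"
    using subset_Zorn_nonempty[of \<A>] by blast
  have "\<phi> \<in> q \<or> Neg \<phi> \<in> q" if "\<phi> \<in> LM_formulas L M" for \<phi>
    using fin_sat_insert_or_insert_Neg[of M q \<phi>] q max[of "insert \<phi> q"] max[of "insert (Neg \<phi>) q"]
      that LM_formulas_Neg[OF that] unfolding \<A>_def by blast
  then have "q \<in> types L M"
    using q unfolding \<A>_def types_def fin_sat_def by blast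
  then show ?thesis using q unfolding \<A>_def by blast
qed

lemma types_Neg_iff:
  assumes q: "q \<in> types L M" and "\<phi> \<in> LM_formulas L M"
  shows "Neg \<phi> \<in> q \<longleftrightarrow> \<phi> \<notin> q"
proof
  assume "Neg \<phi> \<in> q"
  then show "\<phi> \<notin> q"
    using fin_satD[OF fin_sat_types[OF q], of "{\<phi>, Neg \<phi>}"] by auto
next
  assume "\<phi> \<notin> q"
  then show "Neg \<phi> \<in> q" using assms unfolding types_def by blast
qed

lemma types_Conj_iff:
  assumes q: "q \<in> types L M" and \<phi>: "\<phi> \<in> LM_formulas L M" and \<psi>: "\<psi> \<in> LM_formulas L M"
  shows "Conj \<phi> \<psi> \<in> q \<longleftrightarrow> \<phi> \<in> q \<and> \<psi> \<in> q"
proof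
  assume conj: "Conj \<phi> \<psi> \<in> q"
  show "\<phi> \<in> q \<and> \<psi> \<in> q"
  proof (rule ccontr)
    assume "\<not> (\<phi> \<in> q \<and> \<psi> \<in> q)"
    then obtain \<theta> where "\<theta> \<in> {\<phi>, \<psi>}" "Neg \<theta> \<in> q"
      using types_Neg_iff[OF q] \<phi> \<psi> by blast
    then show False
      using conj fin_satD[OF fin_sat_types[OF q], of "{Conj \<phi> \<psi>, Neg \<theta>}"] by auto
  qed
next
  assume "\<phi> \<in> q \<and> \<psi> \<in> q"
  then have "Neg (Conj \<phi> \<psi>) \<notin> q"
    using fin_satD[OF fin_sat_types[OF q], of "{\<phi>, \<psi>, Neg (Conj \<phi> \<psi>)}"] by auto
  then show "Conj \<phi> \<psi> \<in> q"
    using types_Neg_iff[OF q LM_formulas_Conj[OF \<phi> \<psi>]] by blast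
qed

lemma type_box_subset_types_pi: "type_box L \<pi> M \<phi> \<subseteq> types_pi L \<pi> M"
  unfolding type_box_def by blast

lemma type_box_Neg:
  "\<phi> \<in> LM_formulas L M \<Longrightarrow> type_box L \<pi> M (Neg \<phi>) = types_pi L \<pi> M - type_box L \<pi> M \<phi>"
  using types_Neg_iff unfolding type_box_def types_pi_def by blast

lemma type_box_Conj:
  "\<phi> \<in> LM_formulas L M \<Longrightarrow> \<psi> \<in> LM_formulas L M \<Longrightarrow>
    type_box L \<pi> M (Conj \<phi> \<psi>) = type_box L \<pi> M \<phi> \<inter> type_box L \<pi> M \<psi>"
  using types_Conj_iff unfolding type_box_def types_pi_def by blast

lemma type_box_subset_iff:
  assumes "partial_type L \<pi>" and "\<phi> \<in> LM_formulas L M" and "\<psi> \<in> LM_formulas L M"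
  shows "type_box L \<pi> M \<phi> \<subseteq> type_box L \<pi> M \<psi> \<longleftrightarrow> \<not> fin_sat M (lift ` \<pi> \<union> {\<phi>, Neg \<psi>})"
    (is "?sub \<longleftrightarrow> \<not> fin_sat M ?S")
proof -
  have S: "?S \<subseteq> LM_formulas L M"
    using assms lift_in_LM_formulas LM_formulas_Neg by blast
  have witness: "?S \<subseteq> q \<longleftrightarrow> q \<in> type_box L \<pi> M \<phi> \<and> q \<notin> type_box L \<pi> M \<psi>"
    if q: "q \<in> types L M" for q
    using types_Neg_iff[OF q assms(3)] q unfolding type_box_def types_pi_def by blast
  show ?thesis
  proof
    assume ?sub
    show "\<not> fin_sat M ?S"
    proof
      assume "fin_sat M ?S"
      then obtain q where "q \<in> types L M" "?S \<subseteq> q"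
        using extend_to_type[OF S] by blast
      then show False using witness \<open>?sub\<close> by blast
    qed
  next
    assume not_fin_sat: "\<not> fin_sat M ?S"
    show ?sub
    proof
      fix q assume q_box: "q \<in> type_box L \<pi> M \<phi>"
      then have q: "q \<in> types L M" unfolding type_box_def types_pi_def by blast
      show "q \<in> type_box L \<pi> M \<psi>"
        using witness[OF q] q_box not_fin_sat fin_sat_subset[OF fin_sat_types[OF q]] by blast
    qed
  qed
qed

lemma type_box_compact:
  assumes "partial_type L \<pi>" and "\<phi> \<in> LM_formulas L M" and \<Psi>: "\<Psi> \<subseteq> LM_formulas L M"
    and cover: "type_box L \<pi> M \<phi> \<subseteq> \<Union>(type_box L \<pi> M ` \<Psi>)"
  shows "\<exists>\<Psi>'\<subseteq>\<Psi>. finite \<Psi>' \<and> type_box L \<pi> M \<phi> \<subseteq> \<Union>(type_box L \<pi> M ` \<Psi>')"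
proof (rule ccontr)
  assume no_subcover: "\<not> ?thesis"
  let ?S = "lift ` \<pi> \<union> {\<phi>} \<union> Neg ` \<Psi>"
  have "fin_sat M ?S"
    unfolding fin_sat_def
  proof (intro allI impI)
    fix F assume F: "F \<subseteq> ?S" "finite F"
    obtain \<Psi>0 where \<Psi>0: "\<Psi>0 \<subseteq> \<Psi>" "finite \<Psi>0" "F \<inter> Neg ` \<Psi> = Neg ` \<Psi>0"
      using finite_subset_image[of "F \<inter> Neg ` \<Psi>" Neg \<Psi>] F(2) by blast
    obtain q where q: "q \<in> type_box L \<pi> M \<phi>" "q \<notin> \<Union>(type_box L \<pi> M ` \<Psi>0)"
      using no_subcover \<Psi>0(1,2) by blast
    then have q_type: "q \<in> types L M" "lift ` \<pi> \<subseteq> q" "\<phi> \<in> q"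
      unfolding type_box_def types_pi_def by auto
    have "Neg \<psi> \<in> q" if "\<psi> \<in> \<Psi>0" for \<psi>
    proof -
      have "\<psi> \<notin> q" using q that q_type unfolding type_box_def types_pi_def by blast
      then show ?thesis using types_Neg_iff[OF q_type(1)] \<Psi> \<Psi>0(1) that by blast
    qed
    then have "F \<subseteq> q" using F(1) \<Psi>0(3) q_type by blast
    then show "\<exists>e. assignment M e \<and> (\<forall>\<phi>\<in>F. sat M e \<phi>)"
      using fin_satD[OF fin_sat_types[OF q_type(1)] _ F(2)] by blast
  qed
  moreover have "?S \<subseteq> LM_formulas L M"
    using assms lift_in_LM_formulas LM_formulas_Neg by blast
  ultimately obtain q where q: "q \<in> types L M" "?S \<subseteq> q"
    using extend_to_type by blast
  then have "q \<in> type_box L \<pi> M \<phi>" unfolding type_box_def types_pi_def by blast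
  then obtain \<psi> where "\<psi> \<in> \<Psi>" "\<psi> \<in> q"
    using cover unfolding type_box_def by blast
  moreover have "Neg \<psi> \<in> q" using q(2) \<open>\<psi> \<in> \<Psi>\<close> by blast
  ultimately show False
    using types_Neg_iff[OF q(1)] \<Psi> by blast
qed

lemma generate_topology_on_type_boxes:
  assumes "generate_topology_on {type_box L \<pi> M \<phi> | \<phi>. \<phi> \<in> LM_formulas L M} U"
    and "q \<in> U \<inter> types_pi L \<pi> M"
  shows "\<exists>\<phi>\<in>LM_formulas L M. q \<in> type_box L \<pi> M \<phi> \<and> type_box L \<pi> M \<phi> \<subseteq> U"
  using assms
proof (induction arbitrary: q rule: generate_topology_on.induct)
  case (Int U V)
  then obtain \<phi> \<psi> where "\<phi> \<in> LM_formulas L M" "q \<in> type_box L \<pi> M \<phi>" "type_box L \<pi> M \<phi> \<subseteq> U"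
    "\<psi> \<in> LM_formulas L M" "q \<in> type_box L \<pi> M \<psi>" "type_box L \<pi> M \<psi> \<subseteq> V"
    by blast
  then show ?case
    by (intro bexI[of _ "Conj \<phi> \<psi>"]) (auto simp: type_box_Conj LM_formulas_Conj)
qed blast+

lemma openin_stone_top_iff:
  "openin (stone_top L \<pi> M) U \<longleftrightarrow> U \<subseteq> types_pi L \<pi> M \<and>
    (\<forall>q\<in>U. \<exists>\<phi>\<in>LM_formulas L M. q \<in> type_box L \<pi> M \<phi> \<and> type_box L \<pi> M \<phi> \<subseteq> U)"
proof -
  have boxes: "{{q \<in> types_pi L \<pi> M. \<phi> \<in> q} | \<phi>. \<phi> \<in> LM_formulas L M} =
      {type_box L \<pi> M \<phi> | \<phi>. \<phi> \<in> LM_formulas L M}"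
    unfolding type_box_def ..
  show ?thesis
  proof
    assume "openin (stone_top L \<pi> M) U"
    then obtain V where gen: "generate_topology_on {type_box L \<pi> M \<phi> | \<phi>. \<phi> \<in> LM_formulas L M} V"
      and U: "U = V \<inter> types_pi L \<pi> M"
      unfolding stone_top_def openin_subtopology boxes openin_topology_generated_by_iff by blast
    show "U \<subseteq> types_pi L \<pi> M \<and>
        (\<forall>q\<in>U. \<exists>\<phi>\<in>LM_formulas L M. q \<in> type_box L \<pi> M \<phi> \<and> type_box L \<pi> M \<phi> \<subseteq> U)"
    proof (intro conjI ballI)
      show "U \<subseteq> types_pi L \<pi> M" using U by blast
      fix q assume "q \<in> U"
      then obtain \<phi> where "\<phi> \<in> LM_formulas L M" "q \<in> type_box L \<pi> M \<phi>" "type_box L \<pi> M \<phi> \<subseteq> V"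
        using generate_topology_on_type_boxes[OF gen] U by blast
      then show "\<exists>\<phi>\<in>LM_formulas L M. q \<in> type_box L \<pi> M \<phi> \<and> type_box L \<pi> M \<phi> \<subseteq> U"
        using U type_box_subset_types_pi by blast
    qed
  next
    assume U: "U \<subseteq> types_pi L \<pi> M \<and>
        (\<forall>q\<in>U. \<exists>\<phi>\<in>LM_formulas L M. q \<in> type_box L \<pi> M \<phi> \<and> type_box L \<pi> M \<phi> \<subseteq> U)"
    let ?K = "{type_box L \<pi> M \<phi> | \<phi>. \<phi> \<in> LM_formulas L M \<and> type_box L \<pi> M \<phi> \<subseteq> U}"
    have "generate_topology_on {type_box L \<pi> M \<phi> | \<phi>. \<phi> \<in> LM_formulas L M} (\<Union>?K)"
      by (rule generate_topology_on.UN) (auto intro: generate_topology_on.Basis)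
    moreover have "U = \<Union>?K \<inter> types_pi L \<pi> M"
      using U by blast
    ultimately show "openin (stone_top L \<pi> M) U"
      unfolding stone_top_def openin_subtopology boxes openin_topology_generated_by_iff by blast
  qed
qed

lemma openin_type_box: "\<phi> \<in> LM_formulas L M \<Longrightarrow> openin (stone_top L \<pi> M) (type_box L \<pi> M \<phi>)"
  unfolding openin_stone_top_iff using type_box_subset_types_pi by blast

definition true_fm :: "('f, 'r, 'x + nat, 'p) fm" where
  "true_fm = Eq (Var (Inl undefined)) (Var (Inl undefined))"

lemma true_fm_in_LM_formulas: "true_fm \<in> LM_formulas L M"
  unfolding true_fm_def LM_formulas_def by auto

lemma map_par_true_fm [simp]: "map_par g true_fm = true_fm"
  unfolding true_fm_def by simp

lemma type_box_true_fm: "type_box L \<pi> M true_fm = types_pi L \<pi> M"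
proof -
  have "true_fm \<in> q" if q: "q \<in> types L M" for q
  proof (rule ccontr)
    assume "true_fm \<notin> q"
    then have "{Neg true_fm} \<subseteq> q"
      using types_Neg_iff[OF q true_fm_in_LM_formulas] by simp
    then show False
      using fin_sat_types[OF q] unfolding fin_sat_def true_fm_def by fastforce
  qed
  then show ?thesis unfolding type_box_def types_pi_def by blast
qed

lemma topspace_stone_top: "topspace (stone_top L \<pi> M) = types_pi L \<pi> M"
proof -
  have "openin (stone_top L \<pi> M) (types_pi L \<pi> M)"
    using openin_type_box[OF true_fm_in_LM_formulas] type_box_true_fm by metis
  then show ?thesis
    by (meson openin_stone_top_iff openin_subset openin_topspace subset_antisym)
qed

lemma LM_formulas_Disj: "\<phi> \<in> LM_formulas L M \<Longrightarrow> \<psi> \<in> LM_formulas L M \<Longrightarrow> Disj \<phi> \<psi> \<in> LM_formulas L M"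
  unfolding Disj_def by (intro LM_formulas_Neg LM_formulas_Conj)

lemma type_box_Disj:
  "\<phi> \<in> LM_formulas L M \<Longrightarrow> \<psi> \<in> LM_formulas L M \<Longrightarrow>
    type_box L \<pi> M (Disj \<phi> \<psi>) = type_box L \<pi> M \<phi> \<union> type_box L \<pi> M \<psi>"
  using type_box_subset_types_pi[of L \<pi> M]
  unfolding Disj_def by (simp add: type_box_Neg type_box_Conj LM_formulas_Neg LM_formulas_Conj) blast

lemma LM_formulas_map_par_Aut: "\<sigma> \<in> Aut L M \<Longrightarrow> \<phi> \<in> LM_formulas L M \<Longrightarrow> map_par \<sigma> \<phi> \<in> LM_formulas L M"
  using Aut_image LM_formulas_map_par LM_formulas_params by (metis image_mono)

lemma act_type_inverse:
  assumes "\<And>a. a \<in> univ M \<Longrightarrow> \<sigma> (\<tau> a) = a" and "q \<subseteq> LM_formulas L M"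
  shows "act_type \<sigma> (act_type \<tau> q) = q"
proof -
  have "map_par \<sigma> (map_par \<tau> \<phi>) = \<phi>" if "\<phi> \<in> q" for \<phi>
    using assms that LM_formulas_params by (intro map_par_inverse) blast+
  then show ?thesis
    unfolding act_type_def image_image by simp
qed

lemma fin_sat_act_type:
  assumes M: "is_struct L M" and \<sigma>: "\<sigma> \<in> Aut L M"
    and "S \<subseteq> LM_formulas L M" and "fin_sat M S"
  shows "fin_sat M (act_type \<sigma> S)"
  unfolding fin_sat_def
proof (intro allI impI)
  fix F assume "F \<subseteq> act_type \<sigma> S" "finite F"
  then obtain F0 where F0: "F0 \<subseteq> S" "finite F0" "F = map_par \<sigma> ` F0"
    unfolding act_type_def by (meson finite_subset_image)
  then obtain e where e: "assignment M e" "\<forall>\<phi>\<in>F0. sat M e \<phi>"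
    using fin_satD[OF assms(4)] by blast
  have "sat M (\<lambda>v. \<sigma> (e v)) (map_par \<sigma> \<phi>)" if "\<phi> \<in> F0" for \<phi>
    using that e F0(1) assms(3) sat_map_par_Aut[OF M \<sigma>] unfolding LM_formulas_def by blast
  then show "\<exists>e. assignment M e \<and> (\<forall>\<phi>\<in>F. sat M e \<phi>)"
    using assignment_Aut[OF \<sigma> e(1)] F0(3) by blast
qed

lemma act_type_in_types_pi:
  fixes q :: "('f, 'r, 'x + nat, 'm) fm set"
  assumes M: "is_struct L M" and \<sigma>: "\<sigma> \<in> Aut L M" and \<pi>: "partial_type L \<pi>"
    and q: "q \<in> types_pi L \<pi> M"
  shows "act_type \<sigma> q \<in> types_pi L \<pi> M"
proof -
  let ?\<tau> = "inv_into (univ M) \<sigma>"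
  have q_LM: "q \<subseteq> LM_formulas L M"
    using q unfolding types_pi_def types_def by blast
  have "act_type \<sigma> q \<subseteq> LM_formulas L M"
    using q_LM LM_formulas_map_par_Aut[OF \<sigma>] unfolding act_type_def by blast
  moreover have "\<phi> \<in> act_type \<sigma> q \<or> Neg \<phi> \<in> act_type \<sigma> q" if \<phi>: "\<phi> \<in> LM_formulas L M" for \<phi>
  proof -
    have "map_par ?\<tau> \<phi> \<in> q \<or> Neg (map_par ?\<tau> \<phi>) \<in> q"
      using q LM_formulas_map_par_Aut[OF inv_into_Aut[OF M \<sigma>] \<phi>] unfolding types_pi_def types_def by blast
    moreover have "map_par \<sigma> (map_par ?\<tau> \<phi>) = \<phi>"
      using \<phi> Aut_inv_into_apply[OF \<sigma>] LM_formulas_params by (intro map_par_inverse) blast+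
    ultimately show ?thesis
      unfolding act_type_def by (metis image_eqI map_par.simps(3))
  qed
  moreover have "fin_sat M (act_type \<sigma> q)"
    using fin_sat_act_type[OF M \<sigma> q_LM] q unfolding types_pi_def types_def fin_sat_def by blast
  moreover have "lift ` \<pi> \<subseteq> act_type \<sigma> q"
  proof
    fix \<phi> :: "('f, 'r, 'x + nat, 'm) fm" assume "\<phi> \<in> lift ` \<pi>"
    moreover have "map_par \<sigma> \<phi> = \<phi>" if "\<phi> \<in> lift ` \<pi>" for \<phi>
      using that \<pi> map_par_lift unfolding partial_type_def L_formula_def by blast
    ultimately show "\<phi> \<in> act_type \<sigma> q"
      using q unfolding types_pi_def act_type_def by (metis (no_types, lifting) image_eqI mem_Collect_eq subsetD)
  qed
  ultimately show ?thesis
    unfolding types_pi_def types_def fin_sat_def by blast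
qed

lemma act_type_type_box:
  assumes M: "is_struct L M" and \<sigma>: "\<sigma> \<in> Aut L M" and \<pi>: "partial_type L \<pi>"
    and \<phi>: "\<phi> \<in> LM_formulas L M"
  shows "act_type \<sigma> ` type_box L \<pi> M \<phi> = type_box L \<pi> M (map_par \<sigma> \<phi>)"
proof
  show "act_type \<sigma> ` type_box L \<pi> M \<phi> \<subseteq> type_box L \<pi> M (map_par \<sigma> \<phi>)"
    using act_type_in_types_pi[OF M \<sigma> \<pi>] unfolding type_box_def act_type_def by blast
  show "type_box L \<pi> M (map_par \<sigma> \<phi>) \<subseteq> act_type \<sigma> ` type_box L \<pi> M \<phi>"
  proof
    let ?\<tau> = "inv_into (univ M) \<sigma>"
    fix q assume q: "q \<in> type_box L \<pi> M (map_par \<sigma> \<phi>)"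
    then have q_types: "q \<in> types_pi L \<pi> M"
      unfolding type_box_def by blast
    have "act_type ?\<tau> q \<in> types_pi L \<pi> M"
      by (rule act_type_in_types_pi[OF M inv_into_Aut[OF M \<sigma>] \<pi> q_types])
    moreover have "map_par ?\<tau> (map_par \<sigma> \<phi>) = \<phi>"
      using \<phi> inv_into_Aut_apply[OF \<sigma>] LM_formulas_params by (intro map_par_inverse) blast+
    then have "\<phi> \<in> act_type ?\<tau> q"
      using q unfolding type_box_def act_type_def by (metis (mono_tags, lifting) image_eqI mem_Collect_eq)
    moreover have "act_type \<sigma> (act_type ?\<tau> q) = q"
      using q_types Aut_inv_into_apply[OF \<sigma>] unfolding types_pi_def types_def
      by (intro act_type_inverse) blast+
    ultimately show "q \<in> act_type \<sigma> ` type_box L \<pi> M \<phi>"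
      unfolding type_box_def by (metis (mono_tags, lifting) image_eqI mem_Collect_eq)
  qed
qed

section \<open>Elementary maps into an \<open>\<aleph>\<^sub>0\<close>-saturated model\<close>

lemma sat_lift_iff_in_theory:
  assumes "complete_theory L T" and "is_model L T N" and "L_sentence L \<theta>" and "assignment N e"
  shows "sat N e (lift \<theta>) \<longleftrightarrow> \<theta> \<in> T"
proof
  assume "sat N e (lift \<theta>)"
  moreover have "\<theta> \<in> T \<or> Neg \<theta> \<in> T"
    using assms(1,3) unfolding complete_theory_def by blast
  ultimately show "\<theta> \<in> T"
    using assms(2,4) unfolding is_model_def lift_def by auto
next
  assume "\<theta> \<in> T"
  then show "sat N e (lift \<theta>)"
    using assms(2,4) unfolding is_model_def by blast
qed

text \<open>A parameter-free sentence with variables in \<open>nat\<close> becomes a sentence of the type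
of \<open>T\<close> by renaming the variables into \<open>Inr\<close>.\<close>

lemma sat_lift_rename_sentence:
  fixes \<phi> :: "('f, 'r, nat, 'p) fm" and N :: "('f, 'r, 'k) struct"
  assumes "params \<phi> = {}" and "fv \<phi> = {}"
  shows "sat N e (lift (rename_fm (Inr :: nat \<Rightarrow> 'v + nat) Inr (map_par (\<lambda>_. ()) \<phi>))) \<longleftrightarrow>
    sat N e' (map_par g \<phi>)"
proof -
  let ?\<kappa> = "\<lambda>a. map_sum id (\<lambda>_. undefined) (Inr a) :: ('v + nat) + 'k"
  have "sat N e (lift (rename_fm Inr Inr (map_par (\<lambda>_. ()) \<phi>))) \<longleftrightarrow>
      sat N e (rename_fm Inr ?\<kappa> (map_par (\<lambda>_. ()) \<phi>))"
    unfolding lift_def map_par_rename_fm comp_def ..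
  also have "\<dots> \<longleftrightarrow> sat N (\<lambda>v. e (Inr v)) (map_par (par_value ?\<kappa> e) (map_par (\<lambda>_. ()) \<phi>))"
    by (rule sat_rename_fm) (auto simp: par_vars_def)
  also have "map_par (par_value ?\<kappa> e) (map_par (\<lambda>_. ()) \<phi>) = map_par g \<phi>"
    unfolding map_par_map_par using assms(1) by (intro map_par_cong) auto
  also have "sat N (\<lambda>v. e (Inr v)) (map_par g \<phi>) \<longleftrightarrow> sat N e' (map_par g \<phi>)"
    using assms(2) by (intro sat_sentence) simp
  finally show ?thesis .
qed

lemma models_agree_on_sentences:
  fixes \<phi> :: "('f, 'r, nat, 'p) fm" and T :: "('f, 'r, 'x + nat, unit) fm set"
    and N :: "('f, 'r, 'k) struct" and N' :: "('f, 'r, 'l) struct"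
  assumes T: "complete_theory L T" and N: "is_model L T N" and N': "is_model L T N'"
    and \<phi>: "wf_fm L \<phi>" "params \<phi> = {}" "fv \<phi> = {}"
  shows "sat N e (map_par g \<phi>) \<longleftrightarrow> sat N' e' (map_par g' \<phi>)"
proof -
  define \<theta> where "\<theta> = rename_fm (Inr :: nat \<Rightarrow> 'x + nat) Inr (map_par (\<lambda>_. ()) \<phi>)"
  have "fv \<theta> = {}"
    using fv_rename_fm[of "Inr :: nat \<Rightarrow> 'x + nat" Inr "map_par (\<lambda>_. ()) \<phi>"] \<phi>(3)
    unfolding \<theta>_def by simp
  moreover have "params \<theta> = {}"
    unfolding \<theta>_def params_rename_fm using \<phi>(2) by simp
  ultimately have sentence: "L_sentence L \<theta>"
    using \<phi>(1) unfolding \<theta>_def L_sentence_def L_formula_def by simp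
  obtain a :: "'x + nat \<Rightarrow> 'k" and a' :: "'x + nat \<Rightarrow> 'l"
    where a: "assignment N a" and a': "assignment N' a'"
    using N N' assignment_exists unfolding is_model_def by metis
  have "sat N e (map_par g \<phi>) \<longleftrightarrow> sat N a (lift \<theta>)"
    unfolding \<theta>_def by (rule sat_lift_rename_sentence[OF \<phi>(2,3), symmetric])
  also have "\<dots> \<longleftrightarrow> \<theta> \<in> T"
    by (rule sat_lift_iff_in_theory[OF T N sentence a])
  also have "\<dots> \<longleftrightarrow> sat N' a' (lift \<theta>)"
    by (rule sat_lift_iff_in_theory[OF T N' sentence a', symmetric])
  also have "\<dots> \<longleftrightarrow> sat N' e' (map_par g' \<phi>)"
    unfolding \<theta>_def by (rule sat_lift_rename_sentence[OF \<phi>(2,3)])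
  finally show ?thesis .
qed

text \<open>Abstracting the parameter \<open>c\<close> into the variable \<open>0\<close>, shifting the others by \<open>Suc\<close>.\<close>

lemma sat_abstract_par:
  fixes \<phi> :: "('f, 'r, nat, 'p) fm"
  assumes "fv \<phi> = {}"
  shows "sat N e (rename_fm Suc (\<lambda>a. if a = c then Inl 0 else Inr (h a)) \<phi>) \<longleftrightarrow>
    sat N e' (map_par (\<lambda>a. if a = c then e 0 else h a) \<phi>)"
proof -
  have "sat N e (rename_fm Suc (\<lambda>a. if a = c then Inl 0 else Inr (h a)) \<phi>) \<longleftrightarrow>
      sat N (\<lambda>v. e (Suc v)) (map_par (par_value (\<lambda>a. if a = c then Inl 0 else Inr (h a)) e) \<phi>)"
    by (rule sat_rename_fm) (auto simp: par_vars_def)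
  also have "map_par (par_value (\<lambda>a. if a = c then Inl 0 else Inr (h a)) e) \<phi> =
      map_par (\<lambda>a. if a = c then e 0 else h a) \<phi>"
    by (intro map_par_cong) (simp add: par_value_def)
  also have "sat N (\<lambda>v. e (Suc v)) (map_par (\<lambda>a. if a = c then e 0 else h a) \<phi>) \<longleftrightarrow>
      sat N e' (map_par (\<lambda>a. if a = c then e 0 else h a) \<phi>)"
    using assms by (intro sat_sentence) simp
  finally show ?thesis .
qed

lemma abstract_par_fv_params:
  fixes \<phi> :: "('f, 'r, nat, 'p) fm"
  assumes "fv \<phi> = {}" and "params \<phi> \<subseteq> insert c A"
  shows "fv (rename_fm Suc (\<lambda>a. if a = c then Inl 0 else Inr a) \<phi>) \<subseteq> {0}"
    and "params (rename_fm Suc (\<lambda>a. if a = c then Inl 0 else Inr a) \<phi>) \<subseteq> A"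
proof -
  have "par_vars (\<lambda>a. if a = c then Inl 0 else Inr a) (params \<phi>) \<subseteq> {0 :: nat}"
  proof
    fix w :: nat assume "w \<in> par_vars (\<lambda>a. if a = c then Inl 0 else Inr a) (params \<phi>)"
    then obtain a where "(if a = c then Inl 0 else Inr a) = (Inl w :: nat + 'p)"
      unfolding par_vars_def by blast
    then show "w \<in> {0}" by (cases "a = c") auto
  qed
  with fv_rename_fm[of Suc "\<lambda>a. if a = c then Inl 0 else Inr a" \<phi>]
  show "fv (rename_fm Suc (\<lambda>a. if a = c then Inl 0 else Inr a) \<phi>) \<subseteq> {0}"
    unfolding assms(1) image_empty Un_empty_left by (rule order_trans)
  show "params (rename_fm Suc (\<lambda>a. if a = c then Inl 0 else Inr a) \<phi>) \<subseteq> A"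
  proof
    fix q assume "q \<in> params (rename_fm Suc (\<lambda>a. if a = c then Inl 0 else Inr a) \<phi>)"
    then obtain a where "a \<in> params \<phi>" "(if a = c then Inl 0 else Inr a) = (Inr q :: nat + 'p)"
      unfolding params_rename_fm by blast
    then show "q \<in> A" using assms(2) by (cases "a = c") auto
  qed
qed

lemma sat_closure_iff:
  fixes \<Phi> :: "('f, 'r, 'v, 'p) fm set" and xs :: "('f, 'r, 'v, 'p) fm list"
    and vs :: "'v list" and v :: 'v and \<rho> :: "'v \<Rightarrow> nat"
  defines "ex_conj \<equiv> Exs vs (Conjs xs (Eq (Var v) (Var v)))"
  assumes xs: "set xs = \<Phi>" and vs: "set vs = fv (Conjs xs (Eq (Var v) (Var v)))"
    and \<rho>: "inj_on \<rho> (vars ex_conj)" and e: "assignment N e"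
  shows "sat N e (map_par g (rename_fm \<rho> Inr ex_conj)) \<longleftrightarrow>
    (\<exists>e'. assignment N e' \<and> (\<forall>\<phi>\<in>\<Phi>. sat N e' (map_par g \<phi>)))"
proof -
  have "map_par g (rename_fm \<rho> Inr ex_conj) = rename_fm \<rho> (\<lambda>a. Inr (g a)) ex_conj"
    unfolding map_par_rename_fm by (simp add: comp_def)
  then have "sat N e (map_par g (rename_fm \<rho> Inr ex_conj)) \<longleftrightarrow>
      sat N (\<lambda>v. e (\<rho> v)) (map_par (par_value (\<lambda>a. Inr (g a)) e) ex_conj)"
    using sat_rename_fm[OF \<rho>, of "\<lambda>a. Inr (g a)" N e] by simp
  also have "map_par (par_value (\<lambda>a. Inr (g a)) e) ex_conj =
      Exs vs (Conjs (map (map_par g) xs) (Eq (Var v) (Var v)))"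
    unfolding ex_conj_def by (simp add: par_value_def)
  also have "sat N (\<lambda>v. e (\<rho> v)) \<dots> \<longleftrightarrow>
      (\<exists>e'. assignment N e' \<and> (\<forall>\<phi>\<in>set (map (map_par g) xs). sat N e' \<phi>))"
  proof (rule sat_Exs_Conjs_iff)
    show "assignment N (\<lambda>v. e (\<rho> v))"
      using e unfolding assignment_def by simp
    show "fv (Conjs (map (map_par g) xs) (Eq (Var v) (Var v))) \<subseteq> set vs"
      using vs by simp
  qed
  finally show ?thesis
    using xs by simp
qed

locale elementary_transfer =
  fixes L :: "('f, 'r) lang" and T :: "('f, 'r, 'x + nat, unit) fm set"
    and M :: "('f, 'r, 'm) struct" and M' :: "('f, 'r, 'n) struct"
  assumes complete: "complete_theory L T"
    and model_M: "is_model L T M" and saturated_M: "aleph0_saturated L M"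
    and model_M': "is_model L T M'"
begin

lemma struct_M: "is_struct L M"
  using model_M unfolding is_model_def by blast

lemma struct_M': "is_struct L M'"
  using model_M' unfolding is_model_def by blast

definition elem_map :: "'n set \<Rightarrow> ('n \<Rightarrow> 'm) \<Rightarrow> bool" where
  "elem_map A g \<longleftrightarrow> A \<subseteq> univ M' \<and> g ` A \<subseteq> univ M \<and>
     (\<forall>(\<phi> :: ('f, 'r, nat, 'n) fm) e e'. wf_fm L \<phi> \<and> params \<phi> \<subseteq> A \<and> fv \<phi> = {} \<longrightarrow>
        (sat M' e \<phi> \<longleftrightarrow> sat M e' (map_par g \<phi>)))"

lemma elem_mapD:
  fixes \<phi> :: "('f, 'r, nat, 'n) fm"
  shows "elem_map A g \<Longrightarrow> wf_fm L \<phi> \<Longrightarrow> params \<phi> \<subseteq> A \<Longrightarrow> fv \<phi> = {} \<Longrightarrow>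
    sat M' e \<phi> \<longleftrightarrow> sat M e' (map_par g \<phi>)"
  unfolding elem_map_def by blast

lemma elem_map_subset: "elem_map A g \<Longrightarrow> B \<subseteq> A \<Longrightarrow> elem_map B g"
  unfolding elem_map_def by blast

lemma elem_map_empty: "elem_map {} g"
  unfolding elem_map_def
proof (intro conjI allI impI)
  fix \<phi> :: "('f, 'r, nat, 'n) fm" and e e' assume "wf_fm L \<phi> \<and> params \<phi> \<subseteq> {} \<and> fv \<phi> = {}"
  then show "sat M' e \<phi> \<longleftrightarrow> sat M e' (map_par g \<phi>)"
    using models_agree_on_sentences[OF complete model_M' model_M, of \<phi> e "\<lambda>a. a"]
    by (simp add: map_par_ident)
qed auto

lemma elem_map_realize:
  assumes g: "elem_map A g" and "finite A" and a': "a' \<in> univ M'" and e: "assignment M e"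
  shows "\<exists>b\<in>univ M. \<forall>\<psi> :: ('f, 'r, nat, 'n) fm.
    wf_fm L \<psi> \<and> params \<psi> \<subseteq> A \<and> fv \<psi> \<subseteq> {0} \<and> sat M' (e'(0 := a')) \<psi> \<longrightarrow>
      sat M (e(0 := b)) (map_par g \<psi>)"
proof -
  define tp where "tp = {\<psi> :: ('f, 'r, nat, 'n) fm.
    wf_fm L \<psi> \<and> params \<psi> \<subseteq> A \<and> fv \<psi> \<subseteq> {0} \<and> sat M' (e'(0 := a')) \<psi>}"
  have "fin_sat M (map_par g ` tp)"
    unfolding fin_sat_def
  proof (intro allI impI)
    fix F assume "F \<subseteq> map_par g ` tp" "finite F"
    then obtain F0 where F0: "F0 \<subseteq> tp" "finite F0" "F = map_par g ` F0"
      by (meson finite_subset_image)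
    obtain xs where xs: "set xs = F0"
      using finite_list[OF F0(2)] by blast
    define \<theta> :: "('f, 'r, nat, 'n) fm" where "\<theta> = Ex 0 (Conjs xs (Eq (Var 0) (Var 0)))"
    have \<theta>: "wf_fm L \<theta>" "params \<theta> \<subseteq> A" "fv \<theta> = {}"
      using F0(1) xs unfolding \<theta>_def tp_def by auto
    have "sat M' (e'(0 := a')) (Conjs xs (Eq (Var 0) (Var 0)))"
      using F0(1) xs unfolding tp_def by auto
    then have "sat M' e' \<theta>"
      unfolding \<theta>_def using a' by auto
    then have "sat M e (map_par g \<theta>)"
      using elem_mapD[OF g \<theta>] by blast
    then obtain b where "b \<in> univ M" "\<forall>\<phi>\<in>F. sat M (e(0 := b)) \<phi>"
      using F0(3) xs unfolding \<theta>_def by auto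
    moreover have "assignment M (e(0 := b))"
      using e \<open>b \<in> univ M\<close> unfolding assignment_def by simp
    ultimately show "\<exists>e. assignment M e \<and> (\<forall>\<phi>\<in>F. sat M e \<phi>)" by blast
  qed
  moreover have "finite (g ` A)" "g ` A \<subseteq> univ M"
    using g \<open>finite A\<close> unfolding elem_map_def by auto
  moreover have "\<forall>\<phi>\<in>map_par g ` tp. wf_fm L \<phi> \<and> params \<phi> \<subseteq> g ` A \<and> fv \<phi> \<subseteq> {0}"
    unfolding tp_def by auto
  ultimately obtain e'' where e'': "assignment M e''" "\<forall>\<phi>\<in>map_par g ` tp. sat M e'' \<phi>"
    using saturated_M[unfolded aleph0_saturated_def, THEN spec[of _ "g ` A"],
        THEN spec[of _ "map_par g ` tp"]]
    unfolding fin_sat_def by blast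
  show ?thesis
  proof (intro bexI allI impI)
    show "e'' 0 \<in> univ M"
      using e''(1) unfolding assignment_def by blast
    fix \<psi> :: "('f, 'r, nat, 'n) fm"
    assume "wf_fm L \<psi> \<and> params \<psi> \<subseteq> A \<and> fv \<psi> \<subseteq> {0} \<and> sat M' (e'(0 := a')) \<psi>"
    then have "\<psi> \<in> tp" and "fv (map_par g \<psi>) \<subseteq> {0}"
      unfolding tp_def by auto
    moreover have "sat M e'' (map_par g \<psi>) = sat M (e(0 := e'' 0)) (map_par g \<psi>)"
      using \<open>fv (map_par g \<psi>) \<subseteq> {0}\<close> by (intro sat_cong) auto
    ultimately show "sat M (e(0 := e'' 0)) (map_par g \<psi>)"
      using e''(2) by blast
  qed
qed

lemma elem_map_insert:
  assumes g: "elem_map A g" and "finite A" and a': "a' \<in> univ M'"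
  shows "\<exists>b. elem_map (insert a' A) (g(a' := b))"
proof (cases "a' \<in> A")
  case True
  then have "elem_map (insert a' A) (g(a' := g a'))"
    using g by (simp add: insert_absorb)
  then show ?thesis ..
next
  case False
  obtain e :: "nat \<Rightarrow> 'm" where e: "assignment M e" using assignment_exists[OF struct_M] by blast
  obtain e' :: "nat \<Rightarrow> 'n" where e': "assignment M' e'" using assignment_exists[OF struct_M'] by blast
  obtain b where b: "b \<in> univ M" and realize: "\<forall>\<psi> :: ('f, 'r, nat, 'n) fm.
    wf_fm L \<psi> \<and> params \<psi> \<subseteq> A \<and> fv \<psi> \<subseteq> {0} \<and> sat M' (e'(0 := a')) \<psi> \<longrightarrow>
      sat M (e(0 := b)) (map_par g \<psi>)"
    using elem_map_realize[OF g \<open>finite A\<close> a' e, where e'=e'] ..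
  have "sat M' e1 \<phi> \<longleftrightarrow> sat M e2 (map_par (g(a' := b)) \<phi>)"
    if \<phi>: "wf_fm L \<phi>" "params \<phi> \<subseteq> insert a' A" "fv \<phi> = {}" for \<phi> :: "('f, 'r, nat, 'n) fm" and e1 e2
  proof -
    define \<psi> where "\<psi> = rename_fm Suc (\<lambda>a. if a = a' then Inl 0 else Inr a) \<phi>"
    have \<psi>: "wf_fm L \<psi>" "params \<psi> \<subseteq> A" "fv \<psi> \<subseteq> {0}"
      using \<phi> abstract_par_fv_params[OF \<phi>(3,2)] unfolding \<psi>_def by auto
    have in_M': "sat M' (e'(0 := a')) \<psi> \<longleftrightarrow> sat M' e1 \<phi>"
      using sat_abstract_par[OF \<phi>(3), of M' "e'(0 := a')" a' "\<lambda>a. a" e1]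
      unfolding \<psi>_def by (simp add: map_par_id_on)
    have "map_sum id g \<circ> (\<lambda>a. if a = a' then Inl 0 else Inr a) =
        (\<lambda>a. if a = a' then Inl (0 :: nat) else Inr (g a))"
      by (simp add: fun_eq_iff)
    then have "map_par g \<psi> = rename_fm Suc (\<lambda>a. if a = a' then Inl 0 else Inr (g a)) \<phi>"
      unfolding \<psi>_def map_par_rename_fm by simp
    moreover have "(\<lambda>a. if a = a' then (e(0 := b)) 0 else g a) = g(a' := b)"
      by (simp add: fun_eq_iff)
    ultimately have in_M: "sat M (e(0 := b)) (map_par g \<psi>) \<longleftrightarrow> sat M e2 (map_par (g(a' := b)) \<phi>)"
      using sat_abstract_par[OF \<phi>(3), of M "e(0 := b)" a' g e2] by simp
    have "sat M' (e'(0 := a')) \<psi> \<Longrightarrow> sat M (e(0 := b)) (map_par g \<psi>)"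
      using realize \<psi> by blast
    moreover have "\<not> sat M' (e'(0 := a')) \<psi> \<Longrightarrow> \<not> sat M (e(0 := b)) (map_par g \<psi>)"
      using realize[rule_format, of "Neg \<psi>"] \<psi> by simp
    ultimately show ?thesis
      using in_M' in_M by blast
  qed
  moreover have "insert a' A \<subseteq> univ M'" "(g(a' := b)) ` insert a' A \<subseteq> univ M"
    using g a' b False unfolding elem_map_def by auto
  ultimately show ?thesis
    unfolding elem_map_def by blast
qed

lemma elem_map_exists: "finite A \<Longrightarrow> A \<subseteq> univ M' \<Longrightarrow> \<exists>g. elem_map A g"
proof (induction A rule: finite_induct)
  case empty
  then show ?case using elem_map_empty by blast
next
  case (insert a A)
  then show ?case using elem_map_insert by blast
qed

lemma elem_map_inj_on: "elem_map A g \<Longrightarrow> inj_on g A"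
proof (rule inj_onI)
  fix a b assume "elem_map A g" "a \<in> A" "b \<in> A" "g a = g b"
  then show "a = b"
    using elem_mapD[of A g "Eq (Par a) (Par b)" "\<lambda>_. a" "\<lambda>_. g a"] by simp
qed

lemma elem_map_satisfiable_iff:
  fixes \<Phi> :: "('f, 'r, 'v, 'n) fm set"
  assumes g: "elem_map A g" and "finite \<Phi>" and \<Phi>: "\<forall>\<phi>\<in>\<Phi>. wf_fm L \<phi> \<and> params \<phi> \<subseteq> A"
  shows "(\<exists>e. assignment M' e \<and> (\<forall>\<phi>\<in>\<Phi>. sat M' e \<phi>)) \<longleftrightarrow>
    (\<exists>e. assignment M e \<and> (\<forall>\<phi>\<in>\<Phi>. sat M e (map_par g \<phi>)))"
proof -
  obtain xs where xs: "set xs = \<Phi>"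
    using finite_list[OF \<open>finite \<Phi>\<close>] by blast
  define conj where "conj = Conjs xs (Eq (Var undefined) (Var undefined))"
  obtain vs where vs: "set vs = fv conj"
    using finite_list[OF finite_fv[of conj]] by blast
  obtain \<rho> :: "'v \<Rightarrow> nat" and n where "\<rho> ` vars (Exs vs conj) = {i. i < n}"
    and \<rho>: "inj_on \<rho> (vars (Exs vs conj))"
    using finite_imp_inj_to_nat_seg[OF finite_vars[of "Exs vs conj"]] by blast
  define \<theta> where "\<theta> = rename_fm \<rho> Inr (Exs vs conj)"
  have \<theta>: "wf_fm L \<theta>" "params \<theta> \<subseteq> A" "fv \<theta> = {}"
  proof -
    show "wf_fm L \<theta>"
      using \<Phi> xs unfolding \<theta>_def conj_def by simp
    show "params \<theta> \<subseteq> A"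
      using \<Phi> xs unfolding \<theta>_def conj_def params_rename_fm by auto
    show "fv \<theta> = {}"
      using fv_rename_fm[of \<rho> Inr "Exs vs conj"] vs unfolding \<theta>_def by simp
  qed
  obtain e :: "nat \<Rightarrow> 'm" where e: "assignment M e"
    using assignment_exists[OF struct_M] by blast
  obtain e' :: "nat \<Rightarrow> 'n" where e': "assignment M' e'"
    using assignment_exists[OF struct_M'] by blast
  note closure = sat_closure_iff[OF xs vs[unfolded conj_def] \<rho>[unfolded conj_def]]
  have "(\<exists>e. assignment M' e \<and> (\<forall>\<phi>\<in>\<Phi>. sat M' e \<phi>)) \<longleftrightarrow> sat M' e' (map_par (\<lambda>a. a) \<theta>)"
    using closure[OF e', of "\<lambda>a. a"] unfolding \<theta>_def conj_def by (simp add: map_par_ident)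
  also have "\<dots> \<longleftrightarrow> sat M e (map_par g \<theta>)"
    using elem_mapD[OF g \<theta>] by (simp add: map_par_ident)
  also have "\<dots> \<longleftrightarrow> (\<exists>e. assignment M e \<and> (\<forall>\<phi>\<in>\<Phi>. sat M e (map_par g \<phi>)))"
    using closure[OF e, of g] unfolding \<theta>_def conj_def .
  finally show ?thesis .
qed

lemma elem_map_fin_sat_iff:
  fixes S :: "('f, 'r, 'v, 'n) fm set"
  assumes g: "elem_map A g" and S: "\<forall>\<phi>\<in>S. wf_fm L \<phi> \<and> params \<phi> \<subseteq> A"
  shows "fin_sat M' S \<longleftrightarrow> fin_sat M (map_par g ` S)"
proof -
  have iff: "(\<exists>e. assignment M' e \<and> (\<forall>\<phi>\<in>F. sat M' e \<phi>)) \<longleftrightarrow>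
      (\<exists>e. assignment M e \<and> (\<forall>\<phi>\<in>map_par g ` F. sat M e \<phi>))"
    if "F \<subseteq> S" "finite F" for F
    using elem_map_satisfiable_iff[OF g that(2)] that(1) S by auto
  show ?thesis
  proof
    assume "fin_sat M' S"
    show "fin_sat M (map_par g ` S)"
      unfolding fin_sat_def
    proof (intro allI impI)
      fix F assume "F \<subseteq> map_par g ` S" "finite F"
      then obtain F0 where F0: "F0 \<subseteq> S" "finite F0" and "F = map_par g ` F0"
        by (meson finite_subset_image)
      then show "\<exists>e. assignment M e \<and> (\<forall>\<phi>\<in>F. sat M e \<phi>)"
        using iff[OF F0] fin_satD[OF \<open>fin_sat M' S\<close> F0] by blast
    qed
  next
    assume "fin_sat M (map_par g ` S)"
    show "fin_sat M' S"
      unfolding fin_sat_def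
    proof (intro allI impI)
      fix F assume F: "F \<subseteq> S" "finite F"
      then have "map_par g ` F \<subseteq> map_par g ` S" "finite (map_par g ` F)"
        by auto
      then show "\<exists>e. assignment M' e \<and> (\<forall>\<phi>\<in>F. sat M' e \<phi>)"
        using iff[OF F] fin_satD[OF \<open>fin_sat M (map_par g ` S)\<close>] by blast
    qed
  qed
qed

lemma elem_map_type_box_subset_iff:
  assumes \<pi>: "partial_type L \<pi>" and g: "elem_map A g"
    and \<phi>: "\<phi> \<in> LM_formulas L M'" "params \<phi> \<subseteq> A" and \<psi>: "\<psi> \<in> LM_formulas L M'" "params \<psi> \<subseteq> A"
  shows "type_box L \<pi> M' \<phi> \<subseteq> type_box L \<pi> M' \<psi> \<longleftrightarrow>
    type_box L \<pi> M (map_par g \<phi>) \<subseteq> type_box L \<pi> M (map_par g \<psi>)"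
proof -
  let ?S = "lift ` \<pi> \<union> {\<phi>, Neg \<psi>}"
  have "g ` A \<subseteq> univ M" using g unfolding elem_map_def by blast
  then have g\<phi>\<psi>: "map_par g \<phi> \<in> LM_formulas L M" "map_par g \<psi> \<in> LM_formulas L M"
    using \<phi> \<psi> LM_formulas_map_par by (metis image_mono order_trans)+
  have \<pi>_closed: "wf_fm L \<theta> \<and> params \<theta> = {}" if "\<theta> \<in> \<pi>" for \<theta>
    using \<pi> that unfolding partial_type_def L_formula_def by blast
  have "(\<lambda>\<theta>. map_par g (lift \<theta>)) ` \<pi> = lift ` \<pi>"
    using \<pi>_closed map_par_lift by (intro image_cong) blast+
  then have image: "map_par g ` ?S = lift ` \<pi> \<union> {map_par g \<phi>, Neg (map_par g \<psi>)}"
    by (simp add: image_image)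
  have S: "\<forall>\<theta>\<in>?S. wf_fm L \<theta> \<and> params \<theta> \<subseteq> A"
    using \<phi> \<psi> \<pi>_closed unfolding LM_formulas_def lift_def by auto
  have "type_box L \<pi> M' \<phi> \<subseteq> type_box L \<pi> M' \<psi> \<longleftrightarrow> \<not> fin_sat M' ?S"
    by (rule type_box_subset_iff[OF \<pi> \<phi>(1) \<psi>(1)])
  also have "\<dots> \<longleftrightarrow> \<not> fin_sat M (map_par g ` ?S)"
    using elem_map_fin_sat_iff[OF g S] by simp
  also have "\<dots> \<longleftrightarrow> type_box L \<pi> M (map_par g \<phi>) \<subseteq> type_box L \<pi> M (map_par g \<psi>)"
    unfolding image by (rule type_box_subset_iff[OF \<pi> g\<phi>\<psi>, symmetric])
  finally show ?thesis .
qed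

lemma partial_elementary_elem_maps:
  assumes g1: "elem_map A g1" and g2: "elem_map A g2"
  shows "partial_elementary L M (g1 ` A) (\<lambda>c. g2 (inv_into A g1 c))"
  unfolding partial_elementary_def
proof (intro conjI allI impI)
  show "g1 ` A \<subseteq> univ M" using g1 unfolding elem_map_def by blast
  show "(\<lambda>c. g2 (inv_into A g1 c)) ` g1 ` A \<subseteq> univ M"
    using g2 elem_map_inj_on[OF g1] unfolding elem_map_def by (auto simp: inv_into_f_f)
  fix \<psi> :: "('f, 'r, nat, unit) fm" and e :: "nat \<Rightarrow> 'm"
  assume \<psi>: "L_formula L \<psi> \<and> (\<forall>v. e v \<in> g1 ` A)"
  define e' where "e' v = inv_into A g1 (e v)" for v
  define \<theta> where "\<theta> = inst_fm (\<lambda>v. Some (e' v)) (lift \<psi> :: ('f, 'r, nat, 'n) fm)"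
  have params_\<psi>: "params \<psi> = {}" using \<psi> unfolding L_formula_def by blast
  have "e' v \<in> A" for v
    using \<psi> unfolding e'_def by (auto intro: inv_into_into)
  then have \<theta>: "wf_fm L \<theta>" "params \<theta> \<subseteq> A" "fv \<theta> = {}"
    using \<psi> params_inst_fm[of "\<lambda>v. Some (e' v)" "lift \<psi>"] fv_inst_fm[of "\<lambda>v. Some (e' v)" "lift \<psi>"]
    unfolding \<theta>_def lift_def L_formula_def by auto
  have map_par_\<theta>: "map_par g \<theta> = inst_fm (\<lambda>v. Some (g (e' v))) (lift \<psi>)" for g :: "'n \<Rightarrow> 'm"
    unfolding \<theta>_def map_par_inst_fm map_par_lift[OF params_\<psi>] by simp
  have "sat M e (lift \<psi>) \<longleftrightarrow> sat M e (map_par g1 \<theta>)"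
    unfolding map_par_\<theta> sat_inst_fm e'_def using \<psi> by (simp add: f_inv_into_f)
  also have "\<dots> \<longleftrightarrow> sat M e (map_par g2 \<theta>)"
    using elem_mapD[OF g1 \<theta>] elem_mapD[OF g2 \<theta>] by blast
  also have "\<dots> \<longleftrightarrow> sat M ((\<lambda>c. g2 (inv_into A g1 c)) \<circ> e) (lift \<psi>)"
    unfolding map_par_\<theta> sat_inst_fm e'_def by (simp add: comp_def)
  finally show "sat M e (lift \<psi>) \<longleftrightarrow> sat M ((\<lambda>c. g2 (inv_into A g1 c)) \<circ> e) (lift \<psi>)" .
qed

lemma elem_map_comp_Aut:
  assumes g: "elem_map A g" and \<sigma>: "\<sigma> \<in> Aut L M'"
  shows "elem_map (\<sigma> ` A) (\<lambda>a. g (inv_into (univ M') \<sigma> a))"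
proof -
  let ?\<tau> = "inv_into (univ M') \<sigma>"
  have A: "A \<subseteq> univ M'" using g unfolding elem_map_def by blast
  have \<tau>_\<sigma>: "?\<tau> (\<sigma> a) = a" if "a \<in> A" for a
    using that A inv_into_Aut_apply[OF \<sigma>] by blast
  have "sat M' e \<phi> \<longleftrightarrow> sat M e' (map_par (\<lambda>a. g (?\<tau> a)) \<phi>)"
    if \<phi>: "wf_fm L \<phi>" "params \<phi> \<subseteq> \<sigma> ` A" "fv \<phi> = {}" for \<phi> :: "('f, 'r, nat, 'n) fm" and e e'
  proof -
    obtain a :: "nat \<Rightarrow> 'n" where a: "assignment M' a"
      using assignment_exists[OF struct_M'] by blast
    have params_\<tau>: "params (map_par ?\<tau> \<phi>) \<subseteq> A"
      using \<phi>(2) \<tau>_\<sigma> by auto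
    have "params \<phi> \<subseteq> univ M'"
      using \<phi>(2) A Aut_image[OF \<sigma>] by blast
    have "sat M' e \<phi> \<longleftrightarrow> sat M' a \<phi>"
      using \<phi>(3) by (rule sat_sentence)
    also have "\<dots> \<longleftrightarrow> sat M' (\<lambda>v. ?\<tau> (a v)) (map_par ?\<tau> \<phi>)"
      using sat_map_par_Aut[OF struct_M' inv_into_Aut[OF struct_M' \<sigma>] \<phi>(1) \<open>params \<phi> \<subseteq> univ M'\<close> a]
      by simp
    also have "\<dots> \<longleftrightarrow> sat M e' (map_par g (map_par ?\<tau> \<phi>))"
      using elem_mapD[OF g _ params_\<tau>] \<phi> by simp
    finally show ?thesis by (simp add: map_par_map_par comp_def)
  qed
  moreover have "\<sigma> ` A \<subseteq> univ M'" "(\<lambda>a. g (?\<tau> a)) ` \<sigma> ` A \<subseteq> univ M"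
    using A Aut_image[OF \<sigma>] g \<tau>_\<sigma> unfolding elem_map_def by auto
  ultimately show ?thesis
    unfolding elem_map_def by blast
qed

end

section \<open>Regular extension of a content on a compact clopen basis\<close>

lemma sets_borel_of: "sets (borel_of X) = sigma_sets (topspace X) {U. openin X U}"
  unfolding borel_of_def by (rule sets_measure_of) (auto dest: openin_subset)

lemma image_image_inverse: "(\<And>x. x \<in> C \<Longrightarrow> f (g x) = x) \<Longrightarrow> f ` g ` C = C"
  by (simp add: image_image cong: image_cong)

lemma vimage_Int_inverse:
  assumes "\<And>x. x \<in> X \<Longrightarrow> f x \<in> X \<and> g x \<in> X \<and> g (f x) = x \<and> f (g x) = x" and "U \<subseteq> X"
  shows "g -` U \<inter> X = f ` U"
proof
  show "g -` U \<inter> X \<subseteq> f ` U"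
    using assms(1) by (metis (no_types, lifting) IntE image_eqI subsetI vimageE)
  show "f ` U \<subseteq> g -` U \<inter> X"
    using assms by auto
qed

text \<open>Caratheodory's construction from \<open>outer\<close>: compactness of the clopen sets makes \<open>inner\<close>
countably subadditive on open sets, and regularity is built into \<open>outer\<close>. Being canonical, the
resulting measure inherits every symmetry of \<open>(Cl, \<nu>)\<close>.\<close>

locale clopen_content =
  fixes X :: "'a set" and Cl :: "'a set set" and \<nu> :: "'a set \<Rightarrow> real" and \<tau> :: "'a topology"
  assumes space_in_Cl: "X \<in> Cl"
    and Cl_subset: "C \<in> Cl \<Longrightarrow> C \<subseteq> X"
    and Cl_compl: "C \<in> Cl \<Longrightarrow> X - C \<in> Cl"
    and Cl_Int: "C \<in> Cl \<Longrightarrow> D \<in> Cl \<Longrightarrow> C \<inter> D \<in> Cl"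
    and Cl_compact: "C \<in> Cl \<Longrightarrow> \<D> \<subseteq> Cl \<Longrightarrow> C \<subseteq> \<Union>\<D> \<Longrightarrow> \<exists>\<D>'\<subseteq>\<D>. finite \<D>' \<and> C \<subseteq> \<Union>\<D>'"
    and content_nonneg: "C \<in> Cl \<Longrightarrow> 0 \<le> \<nu> C"
    and content_space: "\<nu> X = 1"
    and content_add: "C \<in> Cl \<Longrightarrow> D \<in> Cl \<Longrightarrow> C \<inter> D = {} \<Longrightarrow> \<nu> (C \<union> D) = \<nu> C + \<nu> D"
    and openin_iff: "openin \<tau> U \<longleftrightarrow> U \<subseteq> X \<and> (\<forall>x\<in>U. \<exists>C\<in>Cl. x \<in> C \<and> C \<subseteq> U)"
begin

lemma empty_in_Cl: "{} \<in> Cl"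
  using Cl_compl[OF space_in_Cl] by simp

lemma Cl_Un:
  assumes "C \<in> Cl" and "D \<in> Cl"
  shows "C \<union> D \<in> Cl"
proof -
  have "C \<union> D = X - ((X - C) \<inter> (X - D))"
    using Cl_subset assms by blast
  then show ?thesis
    using assms by (simp add: Cl_compl Cl_Int)
qed

lemma Cl_Diff:
  assumes "C \<in> Cl" and "D \<in> Cl"
  shows "C - D \<in> Cl"
proof -
  have "C - D = C \<inter> (X - D)"
    using Cl_subset assms by blast
  then show ?thesis
    using assms by (simp add: Cl_compl Cl_Int)
qed

lemma Cl_Union: "finite \<F> \<Longrightarrow> \<F> \<subseteq> Cl \<Longrightarrow> \<Union>\<F> \<in> Cl"
  by (induction \<F> rule: finite_induct) (auto intro: Cl_Un empty_in_Cl)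

lemma content_empty: "\<nu> {} = 0"
  using content_add[OF empty_in_Cl empty_in_Cl] by simp

lemma content_mono:
  assumes "C \<in> Cl" and "D \<in> Cl" and "C \<subseteq> D"
  shows "\<nu> C \<le> \<nu> D"
proof -
  have "\<nu> D = \<nu> C + \<nu> (D - C)"
    using content_add[OF assms(1) Cl_Diff[OF assms(2,1)]] assms(3) by (simp add: Un_absorb1)
  then show ?thesis
    using content_nonneg[OF Cl_Diff[OF assms(2,1)]] by simp
qed

lemma ennreal_content_add:
  "C \<in> Cl \<Longrightarrow> D \<in> Cl \<Longrightarrow> C \<inter> D = {} \<Longrightarrow> ennreal (\<nu> (C \<union> D)) = ennreal (\<nu> C) + ennreal (\<nu> D)"
  using content_add content_nonneg by (simp add: ennreal_plus)

lemma openin_Cl: "C \<in> Cl \<Longrightarrow> openin \<tau> C"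
  unfolding openin_iff using Cl_subset by blast

lemma openin_space: "openin \<tau> X"
  using openin_Cl space_in_Cl by blast

lemma openin_imp_subset: "openin \<tau> U \<Longrightarrow> U \<subseteq> X"
  using openin_iff by blast

lemma topspace_eq: "topspace \<tau> = X"
  unfolding topspace_def using openin_space openin_imp_subset by blast

lemma closedin_iff: "closedin \<tau> C \<longleftrightarrow> C \<subseteq> X \<and> openin \<tau> (X - C)"
  unfolding closedin_def topspace_eq by simp

lemma Cl_subset_finite_Un:
  fixes U :: "nat \<Rightarrow> 'a set"
  assumes C: "C \<in> Cl" and U: "\<And>n. openin \<tau> (U n)" and cover: "C \<subseteq> (\<Union>n. U n)"
  shows "\<exists>N. C \<subseteq> (\<Union>n<N. U n)"
proof -
  let ?\<D> = "{D \<in> Cl. \<exists>n. D \<subseteq> U n}"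
  have "C \<subseteq> \<Union>?\<D>"
    using cover U unfolding openin_iff by blast
  then obtain \<D>' where \<D>': "\<D>' \<subseteq> ?\<D>" "finite \<D>'" "C \<subseteq> \<Union>\<D>'"
    using Cl_compact[of C ?\<D>] C by blast
  have "\<forall>D\<in>\<D>'. \<exists>n. D \<subseteq> U n"
    using \<D>'(1) by blast
  then obtain n where n: "\<And>D. D \<in> \<D>' \<Longrightarrow> D \<subseteq> U (n D)"
    by metis
  have "C \<subseteq> (\<Union>m<Suc (Max (n ` \<D>')). U m)"
  proof
    fix x assume "x \<in> C"
    then obtain D where "D \<in> \<D>'" "x \<in> U (n D)"
      using \<D>'(3) n by blast
    moreover have "n D < Suc (Max (n ` \<D>'))" if "D \<in> \<D>'" for D
      using \<D>'(2) that by (simp add: le_imp_less_Suc)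
    ultimately show "x \<in> (\<Union>m<Suc (Max (n ` \<D>')). U m)" by blast
  qed
  then show ?thesis by blast
qed

definition inner :: "'a set \<Rightarrow> ennreal" where
  "inner U = (SUP C\<in>{C \<in> Cl. C \<subseteq> U}. ennreal (\<nu> C))"

definition outer :: "'a set \<Rightarrow> ennreal" where
  "outer A = (INF U\<in>{U. openin \<tau> U \<and> A \<subseteq> U}. inner U)"

lemma inner_mono: "U \<subseteq> V \<Longrightarrow> inner U \<le> inner V"
  unfolding inner_def by (rule SUP_subset_mono) auto

lemma inner_ge: "C \<in> Cl \<Longrightarrow> C \<subseteq> U \<Longrightarrow> ennreal (\<nu> C) \<le> inner U"
  unfolding inner_def by (rule SUP_upper) auto

lemma inner_Cl:
  assumes "C \<in> Cl"
  shows "inner C = ennreal (\<nu> C)"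
proof (rule antisym)
  show "inner C \<le> ennreal (\<nu> C)"
    unfolding inner_def by (rule SUP_least) (auto intro: ennreal_leI content_mono assms)
qed (rule inner_ge[OF assms], simp)

text \<open>By compactness a clopen \<open>C \<subseteq> U \<union> V\<close> splits into clopen pieces inside \<open>U\<close> and \<open>V\<close>.\<close>

lemma inner_Un:
  assumes U: "openin \<tau> U" and V: "openin \<tau> V"
  shows "inner (U \<union> V) \<le> inner U + inner V"
  unfolding inner_def[of "U \<union> V"]
proof (rule SUP_least)
  fix C assume C: "C \<in> {C \<in> Cl. C \<subseteq> U \<union> V}"
  let ?\<D> = "{D \<in> Cl. D \<subseteq> U \<or> D \<subseteq> V}"
  have "C \<subseteq> \<Union>?\<D>"
    using C U V unfolding openin_iff by blast
  then obtain \<D>' where \<D>': "\<D>' \<subseteq> ?\<D>" "finite \<D>'" "C \<subseteq> \<Union>\<D>'"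
    using Cl_compact[of C ?\<D>] C by blast
  define DU where "DU = \<Union>{D \<in> \<D>'. D \<subseteq> U}"
  define DV where "DV = \<Union>{D \<in> \<D>'. D \<subseteq> V}"
  have DU: "DU \<in> Cl" "DU \<subseteq> U" and DV: "DV \<in> Cl" "DV \<subseteq> V"
    using \<D>'(1,2) unfolding DU_def DV_def by (auto intro!: Cl_Union)
  have pieces: "C \<inter> DU \<in> Cl" "C - DU \<in> Cl"
    using C DU by (auto intro: Cl_Int Cl_Diff)
  have rest: "C - DU \<subseteq> DV"
    using \<D>' unfolding DU_def DV_def by blast
  have "ennreal (\<nu> C) = ennreal (\<nu> (C \<inter> DU)) + ennreal (\<nu> (C - DU))"
    using ennreal_content_add[OF pieces(1,2)] by (simp add: Int_Diff_Un Int_Diff_disjoint)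
  also have "\<dots> \<le> inner U + inner V"
    using pieces rest DU DV by (intro add_mono inner_ge) auto
  finally show "ennreal (\<nu> C) \<le> inner U + inner V" .
qed

lemma inner_countable_subadd:
  fixes U :: "nat \<Rightarrow> 'a set"
  assumes U: "\<And>n. openin \<tau> (U n)"
  shows "inner (\<Union>n. U n) \<le> (\<Sum>n. inner (U n))"
  unfolding inner_def[of "\<Union>n. U n"]
proof (rule SUP_least)
  have finite_subadd: "inner (\<Union>n<N. U n) \<le> (\<Sum>n<N. inner (U n))" for N
  proof (induction N)
    case 0
    show ?case using inner_Cl[OF empty_in_Cl] content_empty by simp
  next
    case (Suc N)
    have "openin \<tau> (\<Union>n<N. U n)"
      using U by blast
    then have "inner ((\<Union>n<N. U n) \<union> U N) \<le> inner (\<Union>n<N. U n) + inner (U N)"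
      using U by (rule inner_Un)
    moreover have "(\<Union>n<Suc N. U n) = (\<Union>n<N. U n) \<union> U N"
      by (auto simp: lessThan_Suc)
    ultimately have "inner (\<Union>n<Suc N. U n) \<le> inner (\<Union>n<N. U n) + inner (U N)"
      by simp
    also have "\<dots> \<le> (\<Sum>n<N. inner (U n)) + inner (U N)"
      using Suc by (rule add_right_mono)
    finally show ?case
      by simp
  qed
  fix C assume "C \<in> {C \<in> Cl. C \<subseteq> (\<Union>n. U n)}"
  then have C: "C \<in> Cl" "C \<subseteq> (\<Union>n. U n)"
    by auto
  obtain N where "C \<subseteq> (\<Union>n<N. U n)"
    using Cl_subset_finite_Un[OF C(1) U C(2)] by blast
  then have "ennreal (\<nu> C) \<le> inner (\<Union>n<N. U n)"
    by (rule inner_ge[OF C(1)])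
  also have "\<dots> \<le> (\<Sum>n<N. inner (U n))"
    by (rule finite_subadd)
  also have "\<dots> \<le> (\<Sum>n. inner (U n))"
    by (rule sum_le_suminf) (rule summableI, simp, simp)
  finally show "ennreal (\<nu> C) \<le> (\<Sum>n. inner (U n))" .
qed

lemma outer_le_inner: "openin \<tau> U \<Longrightarrow> A \<subseteq> U \<Longrightarrow> outer A \<le> inner U"
  unfolding outer_def by (rule INF_lower) auto

lemma outer_open:
  assumes "openin \<tau> U"
  shows "outer U = inner U"
proof (rule antisym)
  show "outer U \<le> inner U"
    using outer_le_inner[OF assms] by simp
  show "inner U \<le> outer U"
    unfolding outer_def by (rule INF_greatest) (auto intro: inner_mono)
qed

lemma outer_mono: "A \<subseteq> B \<Longrightarrow> outer A \<le> outer B"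
  unfolding outer_def by (rule INF_superset_mono) auto

lemma outer_Cl: "C \<in> Cl \<Longrightarrow> outer C = ennreal (\<nu> C)"
  using outer_open[OF openin_Cl] inner_Cl by simp

lemma outer_empty: "outer {} = 0"
  using outer_Cl[OF empty_in_Cl] content_empty by simp

lemma outer_le_1: "A \<subseteq> X \<Longrightarrow> outer A \<le> 1"
  using outer_mono[of A X] outer_Cl[OF space_in_Cl] content_space by auto

lemma outer_approx:
  assumes "A \<subseteq> X" and "0 < e"
  obtains U where "openin \<tau> U" "A \<subseteq> U" "inner U < outer A + ennreal e"
proof -
  have "outer A < top"
    using outer_le_1[OF assms(1)] by (simp add: order_le_less_trans)
  then have "outer A + 0 < outer A + ennreal e"
    using assms(2) by (subst ennreal_add_left_cancel_less) auto
  then have "outer A < outer A + ennreal e"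
    by simp
  then obtain U where "openin \<tau> U" "A \<subseteq> U" "inner U < outer A + ennreal e"
    unfolding outer_def[of A] INF_less_iff by auto
  then show ?thesis
    by (rule that)
qed

lemma outer_countable_subadd:
  fixes A :: "nat \<Rightarrow> 'a set"
  assumes A: "\<And>n. A n \<subseteq> X"
  shows "outer (\<Union>n. A n) \<le> (\<Sum>n. outer (A n))"
proof (rule ennreal_le_epsilon)
  fix e :: real assume "0 < e"
  have "\<exists>U. openin \<tau> U \<and> A n \<subseteq> U \<and> inner U < outer (A n) + ennreal (e * (1/2) ^ Suc n)" for n
  proof -
    have "0 < e * (1/2) ^ Suc n"
      using \<open>0 < e\<close> by simp
    then obtain U where "openin \<tau> U" "A n \<subseteq> U" "inner U < outer (A n) + ennreal (e * (1/2) ^ Suc n)"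
      by (rule outer_approx[OF A])
    then show ?thesis by blast
  qed
  then obtain U where U: "\<And>n. openin \<tau> (U n)" "\<And>n. A n \<subseteq> U n"
      "\<And>n. inner (U n) < outer (A n) + ennreal (e * (1/2) ^ Suc n)"
    by metis
  have "outer (\<Union>n. A n) \<le> inner (\<Union>n. U n)"
    using U by (intro outer_le_inner) auto
  also have "\<dots> \<le> (\<Sum>n. inner (U n))"
    by (rule inner_countable_subadd[OF U(1)])
  also have "\<dots> \<le> (\<Sum>n. outer (A n) + ennreal (e * (1/2) ^ Suc n))"
    by (intro suminf_le summableI allI less_imp_le[OF U(3)])
  also have "\<dots> = (\<Sum>n. outer (A n)) + (\<Sum>n. ennreal e * ennreal ((1/2) ^ Suc n))"
    using \<open>0 < e\<close> by (subst suminf_add[symmetric])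
      (auto simp del: ennreal_suminf_cmult simp add: ennreal_mult[symmetric])
  also have "\<dots> = (\<Sum>n. outer (A n)) + e"
    unfolding ennreal_suminf_cmult
    by (subst suminf_ennreal_eq[OF zero_le_power power_half_series]) auto
  finally show "outer (\<Union>n. A n) \<le> (\<Sum>n. outer (A n)) + ennreal e" .
qed

lemma outer_measure_space_outer: "outer_measure_space (Pow X) outer"
proof -
  have "countably_subadditive (Pow X) outer"
    unfolding countably_subadditive_def
  proof (intro allI impI)
    fix A :: "nat \<Rightarrow> 'a set" assume "range A \<subseteq> Pow X"
    then show "outer (\<Union>i. A i) \<le> (\<Sum>i. outer (A i))"
      by (intro outer_countable_subadd) auto
  qed
  then show ?thesis
    unfolding outer_measure_space_def positive_def increasing_def
    using outer_empty outer_mono by auto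
qed

lemma inner_Int_plus_outer_Diff:
  assumes U: "openin \<tau> U" and V: "openin \<tau> V"
  shows "inner (V \<inter> U) + outer (V - U) \<le> inner V"
proof -
  have "inner (V \<inter> U) + outer (V - U) = (SUP C\<in>{C \<in> Cl. C \<subseteq> V \<inter> U}. ennreal (\<nu> C) + outer (V - U))"
    unfolding inner_def using empty_in_Cl by (intro ennreal_SUP_add_left[symmetric]) blast
  also have "\<dots> \<le> inner V"
  proof (rule SUP_least)
    fix C assume "C \<in> {C \<in> Cl. C \<subseteq> V \<inter> U}"
    then have C: "C \<in> Cl" "C \<subseteq> V \<inter> U" by auto
    have "V - C = V \<inter> (X - C)"
      using openin_imp_subset[OF V] by blast
    then have "openin \<tau> (V - C)"
      using openin_Int[OF V openin_Cl[OF Cl_compl[OF C(1)]]] by simp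
    then have "ennreal (\<nu> C) + outer (V - U) \<le> ennreal (\<nu> C) + inner (V - C)"
      using C(2) by (intro add_left_mono outer_le_inner) auto
    also have "\<dots> = (SUP D\<in>{D \<in> Cl. D \<subseteq> V - C}. ennreal (\<nu> C) + ennreal (\<nu> D))"
      unfolding inner_def using empty_in_Cl by (intro ennreal_SUP_add_right) blast
    also have "\<dots> \<le> inner V"
    proof (rule SUP_least)
      fix D assume "D \<in> {D \<in> Cl. D \<subseteq> V - C}"
      then have D: "D \<in> Cl" "D \<subseteq> V - C" by auto
      then have "C \<inter> D = {}"
        by blast
      then have "ennreal (\<nu> C) + ennreal (\<nu> D) = ennreal (\<nu> (C \<union> D))"
        using ennreal_content_add[OF C(1) D(1)] by simp
      also have "\<dots> \<le> inner V"
        using C D Cl_Un by (intro inner_ge) auto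
      finally show "ennreal (\<nu> C) + ennreal (\<nu> D) \<le> inner V" .
    qed
    finally show "ennreal (\<nu> C) + outer (V - U) \<le> inner V" .
  qed
  finally show ?thesis .
qed

lemma open_in_lambda_system:
  assumes U: "openin \<tau> U"
  shows "U \<in> lambda_system X (Pow X) outer"
  unfolding lambda_system_def
proof safe
  show "x \<in> X" if "x \<in> U" for x
    using openin_imp_subset[OF U] that by blast
  fix A assume A: "A \<subseteq> X"
  show "outer (U \<inter> A) + outer ((X - U) \<inter> A) = outer A"
  proof (rule antisym)
    show "outer (U \<inter> A) + outer ((X - U) \<inter> A) \<le> outer A"
      unfolding outer_def[of A]
    proof (rule INF_greatest)
      fix V assume "V \<in> {V. openin \<tau> V \<and> A \<subseteq> V}"
      then have V: "openin \<tau> V" "A \<subseteq> V" by auto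
      have "outer (U \<inter> A) + outer ((X - U) \<inter> A) \<le> inner (V \<inter> U) + outer (V - U)"
        using U V by (intro add_mono outer_le_inner outer_mono) auto
      also have "\<dots> \<le> inner V"
        by (rule inner_Int_plus_outer_Diff[OF U V(1)])
      finally show "outer (U \<inter> A) + outer ((X - U) \<inter> A) \<le> inner V" .
    qed
    interpret Pow: sigma_algebra X "Pow X"
      by (rule sigma_algebra_Pow)
    have "outer ((U \<inter> A) \<union> ((X - U) \<inter> A)) \<le> outer (U \<inter> A) + outer ((X - U) \<inter> A)"
      using A outer_measure_space_outer unfolding outer_measure_space_def
      by (intro subadditiveD[OF Pow.countably_subadditive_subadditive]) auto
    moreover have "(U \<inter> A) \<union> ((X - U) \<inter> A) = A"
      using A by blast
    ultimately show "outer A \<le> outer (U \<inter> A) + outer ((X - U) \<inter> A)" by simp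
  qed
qed

definition borel_sets :: "'a set set" where
  "borel_sets = sigma_sets X {U. openin \<tau> U}"

lemma opens_subset_Pow: "{U. openin \<tau> U} \<subseteq> Pow X"
  using openin_imp_subset by blast

lemma open_in_borel_sets: "openin \<tau> U \<Longrightarrow> U \<in> borel_sets"
  unfolding borel_sets_def by auto

lemma closed_in_borel_sets: "closedin \<tau> C \<Longrightarrow> C \<in> borel_sets"
  using sigma_sets.Compl[OF open_in_borel_sets[unfolded borel_sets_def], of "X - C"]
  unfolding closedin_iff borel_sets_def by (simp add: double_diff)

lemma measure_space_outer: "measure_space X borel_sets outer"
proof -
  interpret Pow: sigma_algebra X "Pow X"
    by (rule sigma_algebra_Pow)
  have lambda: "measure_space X (lambda_system X (Pow X) outer) outer"
    by (rule Pow.caratheodory_lemma[OF outer_measure_space_outer])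
  then have "borel_sets \<subseteq> lambda_system X (Pow X) outer"
    unfolding borel_sets_def measure_space_def
    by (intro sigma_algebra.sigma_sets_subset) (auto intro: open_in_lambda_system)
  moreover have "sigma_algebra X borel_sets"
    unfolding borel_sets_def by (rule sigma_algebra_sigma_sets[OF opens_subset_Pow])
  ultimately show ?thesis
    using measure_down[OF lambda] by blast
qed

definition extension :: "'a measure" where
  "extension = measure_of X {U. openin \<tau> U} outer"

lemma sets_extension: "sets extension = borel_sets"
  unfolding extension_def borel_sets_def by (rule sets_measure_of[OF opens_subset_Pow])

lemma space_extension: "space extension = X"
  unfolding extension_def by (rule space_measure_of[OF opens_subset_Pow])

lemma emeasure_extension: "B \<in> borel_sets \<Longrightarrow> emeasure extension B = outer B"
  using measure_space_outer sets_extension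
  by (intro emeasure_measure_of[OF extension_def opens_subset_Pow]) (auto simp: measure_space_def)

lemma prob_space_extension: "prob_space extension"
  using emeasure_extension[OF open_in_borel_sets[OF openin_space]] outer_Cl[OF space_in_Cl]
    content_space space_extension by (intro prob_spaceI) simp

lemma borel_sets_subset: "B \<in> borel_sets \<Longrightarrow> B \<subseteq> X"
  using sets.sets_into_space sets_extension space_extension by blast

lemma extension_outer_regular:
  assumes B: "B \<in> borel_sets"
  shows "measure extension B = (INF U\<in>{U. openin \<tau> U \<and> B \<subseteq> U}. measure extension U)"
proof -
  interpret prob_space extension
    by (rule prob_space_extension)
  have measure_eq: "measure extension A = enn2real (outer A)" if "A \<in> borel_sets" for A
    using that by (simp add: measure_def emeasure_extension)
  have nonempty: "{U. openin \<tau> U \<and> B \<subseteq> U} \<noteq> {}"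
    using openin_space borel_sets_subset[OF B] by blast
  have bdd: "bdd_below (measure extension ` {U. openin \<tau> U \<and> B \<subseteq> U})"
    by (rule bdd_belowI[of _ 0]) auto
  show ?thesis
  proof (rule antisym)
    show "measure extension B \<le> (INF U\<in>{U. openin \<tau> U \<and> B \<subseteq> U}. measure extension U)"
      using B sets_extension open_in_borel_sets
      by (intro cINF_greatest[OF nonempty]) (auto intro!: finite_measure_mono)
    show "(INF U\<in>{U. openin \<tau> U \<and> B \<subseteq> U}. measure extension U) \<le> measure extension B"
    proof (rule field_le_epsilon)
      fix e :: real assume "0 < e"
      then obtain U where U: "openin \<tau> U" "B \<subseteq> U" "inner U < outer B + ennreal e"
        using outer_approx[OF borel_sets_subset[OF B]] by blast
      have "outer B < top"
        using outer_le_1[OF borel_sets_subset[OF B]] by (simp add: order_le_less_trans)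
      then have sum: "outer B + ennreal e = ennreal (enn2real (outer B) + e)"
        using \<open>0 < e\<close> by (simp add: ennreal_plus ennreal_enn2real)
      then have "inner U < top"
        using U(3) by (metis ennreal_less_top order.strict_trans)
      then have "enn2real (inner U) < enn2real (outer B) + e"
        using U(3) sum by simp
      then have "measure extension U < measure extension B + e"
        using measure_eq[OF B] measure_eq[OF open_in_borel_sets[OF U(1)]] outer_open[OF U(1)] by simp
      moreover have "(INF U\<in>{U. openin \<tau> U \<and> B \<subseteq> U}. measure extension U) \<le> measure extension U"
        using U(1,2) by (intro cINF_lower[OF bdd]) auto
      ultimately show "(INF U\<in>{U. openin \<tau> U \<and> B \<subseteq> U}. measure extension U) \<le> measure extension B + e"
        by linarith
    qed
  qed
qed

text \<open>Inner regularity follows from outer regularity of the complement.\<close>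

lemma extension_inner_regular:
  assumes B: "B \<in> borel_sets"
  shows "measure extension B = (SUP C\<in>{C. closedin \<tau> C \<and> C \<subseteq> B}. measure extension C)"
proof -
  interpret prob_space extension
    by (rule prob_space_extension)
  have nonempty: "{C. closedin \<tau> C \<and> C \<subseteq> B} \<noteq> {}"
    using closedin_empty by blast
  have bdd: "bdd_above (measure extension ` {C. closedin \<tau> C \<and> C \<subseteq> B})"
    by (rule bdd_aboveI[of _ 1]) auto
  have measure_compl: "measure extension (X - A) = 1 - measure extension A" if "A \<in> borel_sets" for A
    using prob_compl[of A] that sets_extension space_extension by simp
  show ?thesis
  proof (rule antisym)
    show "(SUP C\<in>{C. closedin \<tau> C \<and> C \<subseteq> B}. measure extension C) \<le> measure extension B"
      using B sets_extension closed_in_borel_sets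
      by (intro cSUP_least[OF nonempty]) (auto intro!: finite_measure_mono)
    show "measure extension B \<le> (SUP C\<in>{C. closedin \<tau> C \<and> C \<subseteq> B}. measure extension C)"
    proof (rule field_le_epsilon)
      fix e :: real assume "0 < e"
      have compl: "X - B \<in> borel_sets"
        using B unfolding borel_sets_def by (rule sigma_sets.Compl)
      then have "(INF U\<in>{U. openin \<tau> U \<and> X - B \<subseteq> U}. measure extension U) < measure extension (X - B) + e"
        using extension_outer_regular \<open>0 < e\<close> by simp
      then obtain U where U: "openin \<tau> U" "X - B \<subseteq> U" "measure extension U < measure extension (X - B) + e"
        using openin_space by (subst (asm) cINF_less_iff) (auto intro: bdd_belowI[of _ 0])
      have "closedin \<tau> (X - U)" "X - U \<subseteq> B"
        using U(1,2) borel_sets_subset[OF B] openin_imp_subset[OF U(1)]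
        unfolding closedin_iff by (auto simp: double_diff)
      then have "measure extension (X - U) \<le> (SUP C\<in>{C. closedin \<tau> C \<and> C \<subseteq> B}. measure extension C)"
        by (intro cSUP_upper[OF _ bdd]) auto
      then show "measure extension B \<le> (SUP C\<in>{C. closedin \<tau> C \<and> C \<subseteq> B}. measure extension C) + e"
        using measure_compl[OF open_in_borel_sets[OF U(1)]] measure_compl[OF B] U(3) by linarith
    qed
  qed
qed

lemma regular_borel_prob_extension: "regular_borel_prob \<tau> extension"
  unfolding regular_borel_prob_def
proof (intro conjI ballI)
  show "prob_space extension"
    by (rule prob_space_extension)
  show "space extension = topspace \<tau>"
    using space_extension topspace_eq by simp
  show "sets extension = sets (borel_of \<tau>)"
    unfolding sets_borel_of topspace_eq sets_extension borel_sets_def ..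
  fix B assume "B \<in> sets extension"
  then show "measure extension B = (INF U\<in>{U. openin \<tau> U \<and> B \<subseteq> U}. measure extension U)"
    and "measure extension B = (SUP C\<in>{C. closedin \<tau> C \<and> C \<subseteq> B}. measure extension C)"
    using extension_outer_regular extension_inner_regular sets_extension by auto
qed

definition symmetry :: "('a \<Rightarrow> 'a) \<Rightarrow> ('a \<Rightarrow> 'a) \<Rightarrow> bool" where
  "symmetry f g \<longleftrightarrow> (\<forall>x\<in>X. f x \<in> X \<and> g x \<in> X \<and> g (f x) = x \<and> f (g x) = x) \<and>
     (\<forall>C\<in>Cl. f ` C \<in> Cl \<and> g ` C \<in> Cl \<and> \<nu> (f ` C) = \<nu> C)"

lemma symmetry_swap:
  assumes "symmetry f g"
  shows "symmetry g f"
proof -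
  have "\<nu> (g ` C) = \<nu> C" if "C \<in> Cl" for C
  proof -
    have "f ` g ` C = C"
      using assms Cl_subset[OF that] unfolding symmetry_def by (intro image_image_inverse) blast
    then show ?thesis
      using assms that unfolding symmetry_def by metis
  qed
  then show ?thesis
    using assms unfolding symmetry_def by blast
qed

lemma symmetry_openin:
  assumes "symmetry f g" and "openin \<tau> U"
  shows "openin \<tau> (f ` U)"
  unfolding openin_iff
proof (intro conjI ballI)
  show "f ` U \<subseteq> X"
    using assms openin_imp_subset unfolding symmetry_def by blast
  fix y assume "y \<in> f ` U"
  then obtain x where x: "x \<in> U" "y = f x"
    by blast
  then obtain C where "C \<in> Cl" "x \<in> C" "C \<subseteq> U"
    using assms(2) openin_iff by blast
  then show "\<exists>C\<in>Cl. y \<in> C \<and> C \<subseteq> f ` U"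
    using assms(1) x unfolding symmetry_def by blast
qed

lemma symmetry_inner_le:
  assumes fg: "symmetry f g" and U: "openin \<tau> U"
  shows "inner (f ` U) \<le> inner U"
  unfolding inner_def[of "f ` U"]
proof (rule SUP_least)
  fix C assume C: "C \<in> {C \<in> Cl. C \<subseteq> f ` U}"
  have "g ` C \<in> Cl"
    using fg C unfolding symmetry_def by blast
  moreover have "g ` C \<subseteq> U"
  proof
    fix y assume "y \<in> g ` C"
    then obtain u where "u \<in> U" "y = g (f u)"
      using C by auto
    then show "y \<in> U"
      using fg openin_imp_subset[OF U] unfolding symmetry_def by auto
  qed
  moreover have "f ` g ` C = C"
    using fg C Cl_subset unfolding symmetry_def by (intro image_image_inverse) blast
  then have "\<nu> (g ` C) = \<nu> C"
    using fg \<open>g ` C \<in> Cl\<close> unfolding symmetry_def by metis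
  ultimately show "ennreal (\<nu> C) \<le> inner U"
    using inner_ge by metis
qed

lemma symmetry_outer_le:
  assumes "symmetry f g"
  shows "outer (f ` A) \<le> outer A"
  unfolding outer_def[of A]
proof (rule INF_greatest)
  fix U assume U: "U \<in> {U. openin \<tau> U \<and> A \<subseteq> U}"
  then have "outer (f ` A) \<le> inner (f ` U)"
    using symmetry_openin[OF assms] by (intro outer_le_inner) auto
  also have "\<dots> \<le> inner U"
    using symmetry_inner_le[OF assms] U by auto
  finally show "outer (f ` A) \<le> inner U" .
qed

lemma symmetry_outer:
  assumes "symmetry f g" and "A \<subseteq> X"
  shows "outer (f ` A) = outer A"
proof (rule antisym)
  show "outer (f ` A) \<le> outer A"
    by (rule symmetry_outer_le[OF assms(1)])
  have "g ` f ` A = A"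
    using assms unfolding symmetry_def by (intro image_image_inverse) blast
  then show "outer A \<le> outer (f ` A)"
    using symmetry_outer_le[OF symmetry_swap[OF assms(1)], of "f ` A"] by simp
qed

lemma symmetry_borel_sets:
  assumes fg: "symmetry f g" and B: "B \<in> borel_sets"
  shows "f ` B \<in> borel_sets"
proof -
  have inverse: "g -` A \<inter> X = f ` A" if "A \<subseteq> X" for A
    using fg that unfolding symmetry_def by (intro vimage_Int_inverse) auto
  have "g \<in> measurable extension (measure_of X {U. openin \<tau> U} outer)"
  proof (rule measurable_measure_of[OF opens_subset_Pow])
    show "g \<in> space extension \<rightarrow> X"
      using fg space_extension unfolding symmetry_def by auto
    fix U assume "U \<in> {U. openin \<tau> U}"
    then show "g -` U \<inter> space extension \<in> sets extension"
      using inverse[OF openin_imp_subset] symmetry_openin[OF fg] open_in_borel_sets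
        space_extension sets_extension by auto
  qed
  then have "g \<in> measurable extension extension"
    by (simp add: extension_def[symmetric])
  then have "g -` B \<inter> space extension \<in> sets extension"
    using B sets_extension by (intro measurable_sets) auto
  then show ?thesis
    using inverse[OF borel_sets_subset[OF B]] space_extension sets_extension by simp
qed

lemma emeasure_extension_image:
  assumes "symmetry f g" and "B \<in> sets extension"
  shows "emeasure extension (f ` B) = emeasure extension B"
proof -
  have "B \<in> borel_sets"
    using assms(2) sets_extension by simp
  then show ?thesis
    using emeasure_extension symmetry_borel_sets[OF assms(1)] symmetry_outer[OF assms(1)]
      borel_sets_subset by simp
qed

end

section \<open>Transfer of an invariant measure\<close>

locale measure_transfer = elementary_transfer L T M M'
  for L :: "('f, 'r) lang" and T :: "('f, 'r, 'x + nat, unit) fm set"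
    and M :: "('f, 'r, 'm) struct" and M' :: "('f, 'r, 'n) struct" +
  fixes \<pi> :: "('f, 'r, 'x + nat, unit) fm set" and \<mu> :: "('f, 'r, 'x + nat, 'm) fm set measure"
  assumes partial_type: "partial_type L \<pi>"
    and homogeneous_M: "strongly_aleph0_homogeneous L M"
    and invariant: "aut_invariant_measure L \<pi> M \<mu>"
begin

lemma regular_\<mu>: "regular_borel_prob (stone_top L \<pi> M) \<mu>"
  using invariant unfolding aut_invariant_measure_def by blast

lemma prob_space_\<mu>: "prob_space \<mu>"
  using regular_\<mu> unfolding regular_borel_prob_def by blast

lemma type_box_in_sets:
  assumes "\<psi> \<in> LM_formulas L M"
  shows "type_box L \<pi> M \<psi> \<in> sets \<mu>"
proof -
  have "sets \<mu> = sigma_sets (topspace (stone_top L \<pi> M)) {U. openin (stone_top L \<pi> M) U}"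
    using regular_\<mu> sets_borel_of unfolding regular_borel_prob_def by metis
  then show ?thesis
    using openin_type_box[OF assms] by auto
qed

definition transferred_mass :: "('f, 'r, 'x + nat, 'n) fm \<Rightarrow> real" where
  "transferred_mass \<phi> = measure \<mu> (type_box L \<pi> M (map_par (SOME g. elem_map (params \<phi>) g) \<phi>))"

text \<open>Any elementary copy gives the same mass: two copies differ by an automorphism of \<open>M\<close>
(strong homogeneity), which preserves \<open>\<mu>\<close>.\<close>

lemma transferred_mass_eq:
  assumes g: "elem_map A g" and \<phi>: "\<phi> \<in> LM_formulas L M'" "params \<phi> \<subseteq> A"
  shows "transferred_mass \<phi> = measure \<mu> (type_box L \<pi> M (map_par g \<phi>))"
proof -
  let ?B = "params \<phi>"
  let ?g0 = "SOME g. elem_map ?B g"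
  have "\<exists>g. elem_map ?B g"
    using elem_map_exists[OF finite_params LM_formulas_params[OF \<phi>(1)]] .
  then have g0: "elem_map ?B ?g0" by (rule someI_ex)
  have "partial_elementary L M (?g0 ` ?B) (\<lambda>c. g (inv_into ?B ?g0 c))"
    using partial_elementary_elem_maps[OF g0 elem_map_subset[OF g \<phi>(2)]] .
  moreover have "finite (?g0 ` ?B)"
    by (simp add: finite_params)
  ultimately obtain \<sigma> where \<sigma>: "\<sigma> \<in> Aut L M" "\<forall>c\<in>?g0 ` ?B. \<sigma> c = g (inv_into ?B ?g0 c)"
    using homogeneous_M[unfolded strongly_aleph0_homogeneous_def, THEN spec[of _ "?g0 ` ?B"],
        THEN spec[of _ "\<lambda>c. g (inv_into ?B ?g0 c)"]] by blast
  have "\<sigma> (?g0 a) = g a" if "a \<in> ?B" for a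
    using \<sigma>(2) inv_into_f_f[OF elem_map_inj_on[OF g0] that] that by simp
  then have "map_par \<sigma> (map_par ?g0 \<phi>) = map_par g \<phi>"
    unfolding map_par_map_par by (intro map_par_cong) simp
  moreover have "?g0 ` ?B \<subseteq> univ M"
    using g0 unfolding elem_map_def by blast
  then have g0_\<phi>: "map_par ?g0 \<phi> \<in> LM_formulas L M"
    by (rule LM_formulas_map_par[OF \<phi>(1)])
  ultimately have "act_type \<sigma> ` type_box L \<pi> M (map_par ?g0 \<phi>) = type_box L \<pi> M (map_par g \<phi>)"
    using act_type_type_box[OF struct_M \<sigma>(1) partial_type g0_\<phi>] by simp
  moreover have "emeasure \<mu> (act_type \<sigma> ` type_box L \<pi> M (map_par ?g0 \<phi>)) =
      emeasure \<mu> (type_box L \<pi> M (map_par ?g0 \<phi>))"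
    using invariant \<sigma>(1) type_box_in_sets[OF g0_\<phi>] unfolding aut_invariant_measure_def by blast
  ultimately show ?thesis
    unfolding transferred_mass_def measure_def by simp
qed

lemma elem_map_for_two:
  assumes "\<phi> \<in> LM_formulas L M'" and "\<psi> \<in> LM_formulas L M'"
  obtains g where "elem_map (params \<phi> \<union> params \<psi>) g"
proof -
  have "finite (params \<phi> \<union> params \<psi>)"
    by (simp add: finite_params)
  moreover have "params \<phi> \<union> params \<psi> \<subseteq> univ M'"
    using LM_formulas_params[OF assms(1)] LM_formulas_params[OF assms(2)] by blast
  ultimately obtain g where "elem_map (params \<phi> \<union> params \<psi>) g"
    using elem_map_exists by blast
  then show ?thesis by (rule that)
qed

lemma transferred_mass_cong:
  assumes \<phi>: "\<phi> \<in> LM_formulas L M'" and \<psi>: "\<psi> \<in> LM_formulas L M'"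
    and eq: "type_box L \<pi> M' \<phi> = type_box L \<pi> M' \<psi>"
  shows "transferred_mass \<phi> = transferred_mass \<psi>"
proof -
  obtain g where g: "elem_map (params \<phi> \<union> params \<psi>) g"
    using elem_map_for_two[OF \<phi> \<psi>] .
  have "type_box L \<pi> M (map_par g \<phi>) \<subseteq> type_box L \<pi> M (map_par g \<psi>)"
    using elem_map_type_box_subset_iff[OF partial_type g \<phi> Un_upper1 \<psi> Un_upper2] eq by simp
  moreover have "type_box L \<pi> M (map_par g \<psi>) \<subseteq> type_box L \<pi> M (map_par g \<phi>)"
    using elem_map_type_box_subset_iff[OF partial_type g \<psi> Un_upper2 \<phi> Un_upper1] eq by simp
  ultimately have "type_box L \<pi> M (map_par g \<phi>) = type_box L \<pi> M (map_par g \<psi>)"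
    by (rule subset_antisym)
  then show ?thesis
    using transferred_mass_eq[OF g \<phi>] transferred_mass_eq[OF g \<psi>] by simp
qed

definition boxes :: "('f, 'r, 'x + nat, 'n) fm set set set" where
  "boxes = {type_box L \<pi> M' \<phi> | \<phi>. \<phi> \<in> LM_formulas L M'}"

definition box_mass :: "('f, 'r, 'x + nat, 'n) fm set set \<Rightarrow> real" where
  "box_mass C = transferred_mass (SOME \<phi>. \<phi> \<in> LM_formulas L M' \<and> C = type_box L \<pi> M' \<phi>)"

lemma box_mass_type_box:
  assumes "\<phi> \<in> LM_formulas L M'"
  shows "box_mass (type_box L \<pi> M' \<phi>) = transferred_mass \<phi>"
proof -
  let ?\<psi> = "SOME \<psi>. \<psi> \<in> LM_formulas L M' \<and> type_box L \<pi> M' \<phi> = type_box L \<pi> M' \<psi>"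
  have "\<exists>\<psi>. \<psi> \<in> LM_formulas L M' \<and> type_box L \<pi> M' \<phi> = type_box L \<pi> M' \<psi>"
    using assms by blast
  then have "?\<psi> \<in> LM_formulas L M' \<and> type_box L \<pi> M' \<phi> = type_box L \<pi> M' ?\<psi>"
    by (rule someI_ex)
  then have "transferred_mass \<phi> = transferred_mass ?\<psi>"
    by (elim conjE) (rule transferred_mass_cong[OF assms])
  then show ?thesis
    unfolding box_mass_def by (rule sym)
qed

lemma box_mass_add:
  assumes \<phi>: "\<phi> \<in> LM_formulas L M'" and \<psi>: "\<psi> \<in> LM_formulas L M'"
    and disjoint: "type_box L \<pi> M' \<phi> \<inter> type_box L \<pi> M' \<psi> = {}"
  shows "box_mass (type_box L \<pi> M' \<phi> \<union> type_box L \<pi> M' \<psi>) =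
    box_mass (type_box L \<pi> M' \<phi>) + box_mass (type_box L \<pi> M' \<psi>)"
proof -
  obtain g where g: "elem_map (params \<phi> \<union> params \<psi>) g"
    using elem_map_for_two[OF \<phi> \<psi>] .
  have "g ` (params \<phi> \<union> params \<psi>) \<subseteq> univ M"
    using g unfolding elem_map_def by blast
  then have g\<phi>: "map_par g \<phi> \<in> LM_formulas L M" and g\<psi>: "map_par g \<psi> \<in> LM_formulas L M"
    by (auto intro: LM_formulas_map_par[OF \<phi>] LM_formulas_map_par[OF \<psi>])
  have "type_box L \<pi> M' \<phi> \<subseteq> type_box L \<pi> M' (Neg \<psi>)"
    unfolding type_box_Neg[OF \<psi>] using disjoint type_box_subset_types_pi[of L \<pi> M' \<phi>] by blast
  moreover have "params (Neg \<psi>) \<subseteq> params \<phi> \<union> params \<psi>"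
    by simp
  ultimately have "type_box L \<pi> M (map_par g \<phi>) \<subseteq> type_box L \<pi> M (map_par g (Neg \<psi>))"
    using elem_map_type_box_subset_iff[OF partial_type g \<phi> Un_upper1 LM_formulas_Neg[OF \<psi>]] by blast
  then have disjoint_M: "type_box L \<pi> M (map_par g \<phi>) \<inter> type_box L \<pi> M (map_par g \<psi>) = {}"
    using type_box_Neg[OF g\<psi>] by auto
  have "params (Disj \<phi> \<psi>) \<subseteq> params \<phi> \<union> params \<psi>"
    by simp
  then have "transferred_mass (Disj \<phi> \<psi>) =
      measure \<mu> (type_box L \<pi> M (map_par g \<phi>) \<union> type_box L \<pi> M (map_par g \<psi>))"
    using transferred_mass_eq[OF g LM_formulas_Disj[OF \<phi> \<psi>]] type_box_Disj[OF g\<phi> g\<psi>] by simp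
  also have "\<dots> = measure \<mu> (type_box L \<pi> M (map_par g \<phi>)) + measure \<mu> (type_box L \<pi> M (map_par g \<psi>))"
    using finite_measure.finite_measure_Union[OF prob_space.finite_measure[OF prob_space_\<mu>]
        type_box_in_sets[OF g\<phi>] type_box_in_sets[OF g\<psi>] disjoint_M] .
  also have "\<dots> = transferred_mass \<phi> + transferred_mass \<psi>"
    using transferred_mass_eq[OF g \<phi> Un_upper1] transferred_mass_eq[OF g \<psi> Un_upper2] by simp
  finally show ?thesis
    using box_mass_type_box[OF LM_formulas_Disj[OF \<phi> \<psi>]] box_mass_type_box[OF \<phi>]
      box_mass_type_box[OF \<psi>] type_box_Disj[OF \<phi> \<psi>] by simp
qed

lemma boxesE:
  assumes "C \<in> boxes"
  obtains \<phi> where "\<phi> \<in> LM_formulas L M'" and "C = type_box L \<pi> M' \<phi>"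
  using assms unfolding boxes_def by blast

lemma type_box_in_boxes: "\<phi> \<in> LM_formulas L M' \<Longrightarrow> type_box L \<pi> M' \<phi> \<in> boxes"
  unfolding boxes_def by blast

lemma clopen_content_boxes: "clopen_content (types_pi L \<pi> M') boxes box_mass (stone_top L \<pi> M')"
proof
  show "types_pi L \<pi> M' \<in> boxes"
    using type_box_in_boxes[OF true_fm_in_LM_formulas] by (simp add: type_box_true_fm)
  show "C \<subseteq> types_pi L \<pi> M'" if "C \<in> boxes" for C
    using that type_box_subset_types_pi by (elim boxesE) simp
  show "types_pi L \<pi> M' - C \<in> boxes" if "C \<in> boxes" for C
    using that by (elim boxesE) (simp add: type_box_Neg[symmetric] type_box_in_boxes LM_formulas_Neg)
  show "C \<inter> D \<in> boxes" if "C \<in> boxes" "D \<in> boxes" for C D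
    using that by (elim boxesE) (simp add: type_box_Conj[symmetric] type_box_in_boxes LM_formulas_Conj)
  show "\<exists>\<D>'\<subseteq>\<D>. finite \<D>' \<and> C \<subseteq> \<Union>\<D>'" if C: "C \<in> boxes" and \<D>: "\<D> \<subseteq> boxes" and cover: "C \<subseteq> \<Union>\<D>" for C \<D>
  proof -
    obtain \<phi> where \<phi>: "\<phi> \<in> LM_formulas L M'" "C = type_box L \<pi> M' \<phi>"
      using C by (rule boxesE)
    let ?\<Psi> = "{\<psi> \<in> LM_formulas L M'. type_box L \<pi> M' \<psi> \<in> \<D>}"
    have "\<D> = type_box L \<pi> M' ` ?\<Psi>"
      using \<D> unfolding boxes_def by blast
    then obtain \<Psi>' where "\<Psi>' \<subseteq> ?\<Psi>" "finite \<Psi>'" "C \<subseteq> \<Union>(type_box L \<pi> M' ` \<Psi>')"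
      using type_box_compact[OF partial_type \<phi>(1), of ?\<Psi>] cover \<phi>(2) by auto
    then show ?thesis
      by (intro exI[of _ "type_box L \<pi> M' ` \<Psi>'"]) auto
  qed
  show "0 \<le> box_mass C" if "C \<in> boxes" for C
    using that by (elim boxesE) (simp add: box_mass_type_box transferred_mass_def)
  have "box_mass (types_pi L \<pi> M') = transferred_mass true_fm"
    using box_mass_type_box[OF true_fm_in_LM_formulas] by (simp add: type_box_true_fm)
  also have "\<dots> = measure \<mu> (space \<mu>)"
    using regular_\<mu> topspace_stone_top[of L \<pi> M] unfolding transferred_mass_def regular_borel_prob_def
    by (simp add: type_box_true_fm)
  finally show "box_mass (types_pi L \<pi> M') = 1"
    using prob_space.prob_space[OF prob_space_\<mu>] by simp
  show "box_mass (C \<union> D) = box_mass C + box_mass D" if "C \<in> boxes" "D \<in> boxes" "C \<inter> D = {}" for C D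
    using that by (elim boxesE) (simp add: box_mass_add)
  show "openin (stone_top L \<pi> M') U \<longleftrightarrow>
      U \<subseteq> types_pi L \<pi> M' \<and> (\<forall>q\<in>U. \<exists>C\<in>boxes. q \<in> C \<and> C \<subseteq> U)" for U
    unfolding openin_stone_top_iff boxes_def by blast
qed

lemma transferred_mass_Aut:
  assumes \<sigma>: "\<sigma> \<in> Aut L M'" and \<phi>: "\<phi> \<in> LM_formulas L M'"
  shows "transferred_mass (map_par \<sigma> \<phi>) = transferred_mass \<phi>"
proof -
  let ?g = "SOME g. elem_map (params \<phi>) g"
  let ?\<tau> = "inv_into (univ M') \<sigma>"
  have "\<exists>g. elem_map (params \<phi>) g"
    using elem_map_exists[OF finite_params LM_formulas_params[OF \<phi>]] .
  then have g: "elem_map (params \<phi>) ?g" by (rule someI_ex)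
  have "transferred_mass (map_par \<sigma> \<phi>) =
      measure \<mu> (type_box L \<pi> M (map_par (\<lambda>a. ?g (?\<tau> a)) (map_par \<sigma> \<phi>)))"
    using transferred_mass_eq[OF elem_map_comp_Aut[OF g \<sigma>] LM_formulas_map_par_Aut[OF \<sigma> \<phi>]] by simp
  also have "map_par (\<lambda>a. ?g (?\<tau> a)) (map_par \<sigma> \<phi>) = map_par ?g \<phi>"
    unfolding map_par_map_par using inv_into_Aut_apply[OF \<sigma>] LM_formulas_params[OF \<phi>]
    by (intro map_par_cong) auto
  finally show ?thesis
    unfolding transferred_mass_def .
qed

lemma symmetry_act_type:
  assumes \<sigma>: "\<sigma> \<in> Aut L M'"
  shows "clopen_content.symmetry (types_pi L \<pi> M') boxes box_mass
    (act_type \<sigma>) (act_type (inv_into (univ M') \<sigma>))"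
proof -
  interpret clopen_content "types_pi L \<pi> M'" boxes box_mass "stone_top L \<pi> M'"
    by (rule clopen_content_boxes)
  let ?\<tau> = "inv_into (univ M') \<sigma>"
  have \<tau>: "?\<tau> \<in> Aut L M'" by (rule inv_into_Aut[OF struct_M' \<sigma>])
  have "act_type \<sigma> q \<in> types_pi L \<pi> M' \<and> act_type ?\<tau> q \<in> types_pi L \<pi> M' \<and>
      act_type ?\<tau> (act_type \<sigma> q) = q \<and> act_type \<sigma> (act_type ?\<tau> q) = q"
    if q: "q \<in> types_pi L \<pi> M'" for q
  proof -
    have "q \<subseteq> LM_formulas L M'"
      using q unfolding types_pi_def types_def by blast
    then show ?thesis
      using act_type_in_types_pi[OF struct_M' \<sigma> partial_type q] act_type_in_types_pi[OF struct_M' \<tau> partial_type q]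
        act_type_inverse[of M' ?\<tau> \<sigma>] act_type_inverse[of M' \<sigma> ?\<tau>]
        inv_into_Aut_apply[OF \<sigma>] Aut_inv_into_apply[OF \<sigma>] by blast
  qed
  moreover have "act_type \<sigma> ` C \<in> boxes \<and> act_type ?\<tau> ` C \<in> boxes \<and> box_mass (act_type \<sigma> ` C) = box_mass C"
    if "C \<in> boxes" for C
  proof -
    obtain \<phi> where \<phi>: "\<phi> \<in> LM_formulas L M'" "C = type_box L \<pi> M' \<phi>"
      using \<open>C \<in> boxes\<close> unfolding boxes_def by blast
    have images: "act_type \<sigma> ` C = type_box L \<pi> M' (map_par \<sigma> \<phi>)"
      "act_type ?\<tau> ` C = type_box L \<pi> M' (map_par ?\<tau> \<phi>)"
      using act_type_type_box[OF struct_M' \<sigma> partial_type \<phi>(1)]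
        act_type_type_box[OF struct_M' \<tau> partial_type \<phi>(1)] \<phi>(2) by simp_all
    have "box_mass (act_type \<sigma> ` C) = transferred_mass (map_par \<sigma> \<phi>)"
      unfolding images by (rule box_mass_type_box[OF LM_formulas_map_par_Aut[OF \<sigma> \<phi>(1)]])
    also have "\<dots> = transferred_mass \<phi>"
      by (rule transferred_mass_Aut[OF \<sigma> \<phi>(1)])
    also have "\<dots> = box_mass C"
      unfolding \<phi>(2) by (rule box_mass_type_box[OF \<phi>(1), symmetric])
    finally have "box_mass (act_type \<sigma> ` C) = box_mass C" .
    then show ?thesis
      unfolding images boxes_def
      using LM_formulas_map_par_Aut[OF \<sigma> \<phi>(1)] LM_formulas_map_par_Aut[OF \<tau> \<phi>(1)] by blast
  qed
  ultimately show ?thesis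
    unfolding symmetry_def by blast
qed

lemma aut_invariant_measure_exists: "\<exists>\<mu>'. aut_invariant_measure L \<pi> M' \<mu>'"
proof -
  interpret clopen_content "types_pi L \<pi> M'" boxes box_mass "stone_top L \<pi> M'"
    by (rule clopen_content_boxes)
  have "emeasure extension (act_type \<sigma> ` B) = emeasure extension B"
    if "\<sigma> \<in> Aut L M'" "B \<in> sets extension" for \<sigma> B
    using emeasure_extension_image[OF symmetry_act_type[OF that(1)] that(2)] .
  then show ?thesis
    using regular_borel_prob_extension unfolding aut_invariant_measure_def by blast
qed

end

theorem proposition3p3:
  fixes L :: "('f, 'r) lang"
    and T :: "('f, 'r, 'x + nat, unit) fm set"
    and \<pi> :: "('f, 'r, 'x + nat, unit) fm set"
    and M :: "('f, 'r, 'm) struct"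
    and M' :: "('f, 'r, 'n) struct"
  assumes "complete_theory L T"
    and "partial_type L \<pi>"
    and "is_model L T M" and "aleph0_saturated L M" and "strongly_aleph0_homogeneous L M"
    and "is_model L T M'" and "aleph0_saturated L M'" and "strongly_aleph0_homogeneous L M'"
    and "\<exists>\<mu>. aut_invariant_measure L \<pi> M \<mu>"
  shows "\<exists>\<mu>'. aut_invariant_measure L \<pi> M' \<mu>'"
proof -
  obtain \<mu> where "aut_invariant_measure L \<pi> M \<mu>"
    using assms(9) by blast
  then interpret measure_transfer L T M M' \<pi> \<mu>
    using assms by unfold_locales
  show ?thesis
    by (rule aut_invariant_measure_exists)
qed

end
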